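(* Let $\Omega\subset\mathbb{R}^3$ be a bounded convex domain with $C^2$ boundary of everywhere positive Gaussian curvature. There is a constant $C=C(\Omega)$ such that for every $y\in\Omega$ and every unit vector $\hat v\in\mathbb{S}^2$: $$\int_0^{|q_+(y,\hat v)-y|} d_{y+r\hat v}^{-\frac12+\epsilon}\,dr\le C\quad\text{for all }\epsilon\in[0,\tfrac12),$$ and $$\int_0^{|q_+(y,\hat v)-y|} d_{y+r\hat v}^{-1+\epsilon}\,dr\le \frac{C}{\epsilon}\,d_y^{-\frac12+\epsilon}\quad\text{for all }\epsilon\in(0,\tfrac12).$$
   Context: $d_x=\operatorname{dist}(x,\partial\Omega)$. $\tau_+(y,v)=\inf\{t>0: y+tv\notin\Omega\}$, $q_+(y,v)=y+\tau_+(y,v)v$. *)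

theory Defs
  imports "HOL-Analysis.Analysis"
begin

text \<open>Cofactor (i,j) of a 3x3 matrix (indices of type 3 are taken mod 3).\<close>
definition cof3 :: "real^3^3 \<Rightarrow> 3 \<Rightarrow> 3 \<Rightarrow> real" where
  "cof3 A i j = A$(i+1)$(j+1) * A$(i+2)$(j+2) - A$(i+1)$(j+2) * A$(i+2)$(j+1)"

text \<open>Gaussian curvature of a level surface {rho = c} at a point where the gradient of rho
  is g and the Hessian of rho is H (standard implicit formula:
  K = g^T adj(H) g / |g|^4 = - det [[H, g],[g^T, 0]] / |g|^4).\<close>
definition level_gauss_curvature :: "real^3 \<Rightarrow> real^3^3 \<Rightarrow> real" where
  "level_gauss_curvature g H = (\<Sum>i\<in>UNIV. \<Sum>j\<in>UNIV. g$i * g$j * cof3 H i j) / norm g ^ 4"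

definition C2_defining_function ::
  "(real^3) set \<Rightarrow> (real^3) set \<Rightarrow> (real^3 \<Rightarrow> real) \<Rightarrow> (real^3 \<Rightarrow> real^3) \<Rightarrow> (real^3 \<Rightarrow> real^3^3) \<Rightarrow> bool" where
  "C2_defining_function \<Omega> U \<rho> grad hess \<longleftrightarrow>
     open U \<and> frontier \<Omega> \<subseteq> U \<and>
     (\<forall>x\<in>U. (\<rho> has_derivative (\<lambda>h. grad x \<bullet> h)) (at x)) \<and>
     (\<forall>x\<in>U. (grad has_derivative (\<lambda>h. hess x *v h)) (at x)) \<and>
     continuous_on U hess \<and>
     (\<forall>x\<in>U. x \<in> \<Omega> \<longleftrightarrow> \<rho> x < 0) \<and>
     (\<forall>x\<in>frontier \<Omega>. grad x \<noteq> 0)"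

definition C2_boundary_pos_gauss :: "(real^3) set \<Rightarrow> bool" where
  "C2_boundary_pos_gauss \<Omega> \<longleftrightarrow>
     (\<exists>U \<rho> grad hess. C2_defining_function \<Omega> U \<rho> grad hess \<and>
        (\<forall>x\<in>frontier \<Omega>. level_gauss_curvature (grad x) (hess x) > 0))"

definition bdist :: "(real^3) set \<Rightarrow> real^3 \<Rightarrow> real" where
  "bdist \<Omega> x = infdist x (frontier \<Omega>)"

definition tau_plus :: "(real^3) set \<Rightarrow> real^3 \<Rightarrow> real^3 \<Rightarrow> real" where
  "tau_plus \<Omega> y v = Inf {t. t > 0 \<and> y + t *\<^sub>R v \<notin> \<Omega>}"

definition q_plus :: "(real^3) set \<Rightarrow> real^3 \<Rightarrow> real^3 \<Rightarrow> real^3" where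
  "q_plus \<Omega> y v = y + tau_plus \<Omega> y v *\<^sub>R v"

end

theory Submission
  imports Defs
begin

text \<open>The key fact is a quantitative strict convexity of \<open>\<Omega>\<close>: for some \<open>\<kappa> > 0\<close> and all
  boundary points \<open>p, q\<close>, the ball of radius \<open>\<kappa> |p - q|\<^sup>2\<close> around their midpoint lies in \<open>\<Omega>\<close>.
  For short chords this comes from the second-order Taylor expansion of the defining function,
  whose Hessian is semidefinite on tangent planes by convexity, definite by positive Gauss
  curvature, and uniformly so by compactness of the boundary; long chords are handled by
  compactness and strict convexity.

  Let the line through \<open>y\<close> in direction \<open>v\<close> leave \<open>\<Omega>\<close> at \<open>y - \<sigma> v\<close> and \<open>y + \<tau> v\<close>. Coning off the
  ball around the midpoint of this chord bounds \<open>d(y + r v)\<close> from below by a tent function of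
  slope \<open>2 \<kappa> (\<sigma> + \<tau>)\<close>, whose negative powers have explicit integrals. For the weighted bound,
  the cone over the ball of radius \<open>d\<^sub>y\<close> around \<open>y\<close> gives the better slope when \<open>d\<^sub>y\<close> is large.\<close>

section \<open>Integrals of powers of tent functions\<close>

lemma has_integral_powr_tent:
  fixes lo hi a :: real
  assumes "lo < hi" "-1 < a"
  shows "((\<lambda>r. (hi - r) powr a + (r - lo) powr a) has_integral
           (2 * (hi - lo) powr (a+1) / (a+1))) {lo..hi}"
proof -
  define F where "F r = ((r - lo) powr (a+1) - (hi - r) powr (a+1)) / (a+1)" for r
  have "continuous_on {lo..hi} F"
    unfolding F_def by (intro continuous_intros continuous_on_powr') (use assms in auto)
  moreover have "(F has_vector_derivative ((hi - x) powr a + (x - lo) powr a)) (at x)"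
    if "x \<in> {lo<..<hi}" for x
  proof -
    have "((\<lambda>r. (r - lo) powr (a+1)) has_real_derivative (a+1) * (x - lo) powr (a+1 - real 1) * 1) (at x)"
      and "((\<lambda>r. (hi - r) powr (a+1)) has_real_derivative (a+1) * (hi - x) powr (a+1 - real 1) * (-1)) (at x)"
      by (rule DERIV_fun_powr; use that in \<open>auto intro!: derivative_eq_intros\<close>)+
    then have "(F has_real_derivative ((a+1) * (x - lo) powr (a+1 - real 1) * 1
        - (a+1) * (hi - x) powr (a+1 - real 1) * (-1)) / (a+1)) (at x)"
      unfolding F_def by (intro DERIV_cdivide DERIV_diff)
    moreover have "((a+1) * (x - lo) powr (a+1 - real 1) * 1
        - (a+1) * (hi - x) powr (a+1 - real 1) * (-1)) / (a+1) = (hi - x) powr a + (x - lo) powr a"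
      using assms by (simp add: field_simps)
    ultimately show ?thesis
      by (simp add: has_real_derivative_iff_has_vector_derivative[symmetric])
  qed
  ultimately have "((\<lambda>r. (hi - r) powr a + (r - lo) powr a) has_integral (F hi - F lo)) {lo..hi}"
    by (intro fundamental_theorem_of_calculus_interior) (use assms in auto)
  moreover have "F hi - F lo = 2 * (hi - lo) powr (a+1) / (a+1)"
    using assms by (simp add: F_def)
  ultimately show ?thesis by simp
qed

lemma nn_integral_powr_tent_le:
  fixes lo hi A a :: real and g :: "real \<Rightarrow> real"
  assumes "lo < 0" "0 < hi" "A > 0" "-1 < a" "a < 0"
    and tent: "\<And>r. 0 \<le> r \<Longrightarrow> r < hi \<Longrightarrow> A * min (hi - r) (r - lo) \<le> g r"
    and "g hi = 0"
  shows "(\<integral>\<^sup>+ r. indicator {0..hi} r * ennreal (g r powr a) \<partial>lborel)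
          \<le> ennreal (A powr a * (2 * (hi - lo) powr (a+1) / (a+1)))"
proof -
  have "indicator {0..hi} r * ennreal (g r powr a)
      \<le> ennreal (indicator {lo..hi} r * (A powr a * ((hi - r) powr a + (r - lo) powr a)))" for r
  proof (cases "0 \<le> r \<and> r < hi")
    case True
    define m where "m = min (hi - r) (r - lo)"
    have m: "m > 0" using True assms unfolding m_def by auto
    have "g r powr a \<le> (A * m) powr a"
      by (rule powr_mono2') (use assms m tent True m_def in auto)
    also have "\<dots> = A powr a * m powr a" using m assms by (simp add: powr_mult)
    also have "\<dots> \<le> A powr a * ((hi - r) powr a + (r - lo) powr a)"
      unfolding m_def by (intro mult_left_mono) (auto simp: min_def)
    finally show ?thesis using True assms by (auto simp: indicator_def intro!: ennreal_leI)
  qed (use assms in \<open>auto simp: indicator_def\<close>)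
  then have "(\<integral>\<^sup>+ r. indicator {0..hi} r * ennreal (g r powr a) \<partial>lborel)
     \<le> (\<integral>\<^sup>+ r. ennreal (indicator {lo..hi} r * (A powr a * ((hi - r) powr a + (r - lo) powr a))) \<partial>lborel)"
    by (intro nn_integral_mono)
  also have "\<dots> = ennreal (A powr a * (2 * (hi - lo) powr (a+1) / (a+1)))"
    by (intro nn_integral_has_integral_lebesgue has_integral_mult_right has_integral_powr_tent)
      (use assms in auto)
  finally show ?thesis .
qed

section \<open>Distance to the boundary in convex domains\<close>

lemma ball_subset_imp_le_bdist:
  assumes "open \<Omega>" "frontier \<Omega> \<noteq> {}" "ball c R \<subseteq> \<Omega>"
  shows "R \<le> bdist \<Omega> c"
proof -
  have "R \<le> dist c f" if "f \<in> frontier \<Omega>" for f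
  proof (rule ccontr)
    assume "\<not> R \<le> dist c f"
    then have "f \<in> \<Omega>" using assms(3) by auto
    with that assms(1) show False by (simp add: frontier_def interior_open)
  qed
  then show ?thesis
    unfolding bdist_def using assms(2) by (simp add: infdist_notempty cINF_greatest)
qed

lemma ball_bdist_subset:
  assumes "open \<Omega>" "c \<in> \<Omega>"
  shows "ball c (bdist \<Omega> c) \<subseteq> \<Omega>"
proof (rule ccontr)
  assume "\<not> ?thesis"
  then obtain z where z: "z \<in> ball c (bdist \<Omega> c)" "z \<notin> \<Omega>" by blast
  then have c: "c \<in> ball c (bdist \<Omega> c)"
    using zero_le_dist[of c z] by (simp del: zero_le_dist)
  have "ball c (bdist \<Omega> c) \<inter> frontier \<Omega> \<noteq> {}"
    by (rule connected_Int_frontier) (use z assms c in blast)+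
  then obtain f where "f \<in> frontier \<Omega>" "dist c f < bdist \<Omega> c" by auto
  moreover have "bdist \<Omega> c \<le> dist c f" if "f \<in> frontier \<Omega>" for f
    unfolding bdist_def using that by (rule infdist_le)
  ultimately show False by fastforce
qed

lemma bdist_pos:
  assumes "open \<Omega>" "c \<in> \<Omega>" "frontier \<Omega> \<noteq> {}"
  shows "bdist \<Omega> c > 0"
  unfolding bdist_def using assms
  by (intro infdist_pos_not_in_closed) (auto simp: frontier_def interior_open)

lemma frontier_imp_bdist_eq_0: "p \<in> frontier \<Omega> \<Longrightarrow> bdist \<Omega> p = 0"
  by (simp add: bdist_def)

lemma convex_ball_towards_closure_subset:
  fixes \<Omega> :: "'a::euclidean_space set"
  assumes "convex \<Omega>" "open \<Omega>" "ball m R \<subseteq> \<Omega>" "e \<in> closure \<Omega>" "0 < t" "t \<le> 1"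
  shows "ball (t *\<^sub>R m + (1 - t) *\<^sub>R e) (t * R) \<subseteq> \<Omega>"
proof
  fix z assume z: "z \<in> ball (t *\<^sub>R m + (1 - t) *\<^sub>R e) (t * R)"
  define m' where "m' = (1/t) *\<^sub>R (z - (1 - t) *\<^sub>R e)"
  have zm: "z = t *\<^sub>R m' + (1 - t) *\<^sub>R e"
    unfolding m'_def using assms(5) by (simp add: algebra_simps)
  have "m - m' = (1/t) *\<^sub>R ((t *\<^sub>R m + (1 - t) *\<^sub>R e) - z)"
    unfolding m'_def using assms(5) by (simp add: algebra_simps)
  then have "dist m m' = dist (t *\<^sub>R m + (1 - t) *\<^sub>R e) z / t"
    using assms(5) by (simp add: dist_norm)
  also have "\<dots> < R" using z assms(5) by (simp add: pos_divide_less_eq mult.commute)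
  finally have m': "m' \<in> \<Omega>" using assms(3) by auto
  show "z \<in> \<Omega>"
  proof (cases "t = 1 \<or> m' = e")
    case True
    then show ?thesis using zm m' by (auto simp: algebra_simps)
  next
    case False
    then have "z \<in> open_segment m' e"
      using assms(5,6) zm unfolding open_segment_def closed_segment_def
      by (auto intro!: exI[of _ "1 - t"] simp: algebra_simps)
    moreover have "open_segment m' e \<subseteq> interior \<Omega>"
      by (rule in_interior_closure_convex_segment) (use assms m' in \<open>auto simp: interior_open\<close>)
    ultimately show ?thesis using assms(2) by (auto simp: interior_open)
  qed
qed

lemma bdist_on_line_ge:
  fixes \<Omega> :: "(real^3) set"
  assumes "open \<Omega>" "convex \<Omega>" "frontier \<Omega> \<noteq> {}"
    and "ball (y + a *\<^sub>R v) R \<subseteq> \<Omega>" "y + b *\<^sub>R v \<in> closure \<Omega>"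
    and "0 < (b - r) / (b - a)" "(b - r) / (b - a) \<le> 1"
  shows "R * ((b - r) / (b - a)) \<le> bdist \<Omega> (y + r *\<^sub>R v)"
proof -
  define t where "t = (b - r) / (b - a)"
  have "a \<noteq> b" using assms(6) by auto
  then have "t * (b - a) = b - r" by (simp add: t_def)
  then have "t * a + (1 - t) * b = r" by (simp add: algebra_simps)
  moreover have "t *\<^sub>R (y + a *\<^sub>R v) + (1 - t) *\<^sub>R (y + b *\<^sub>R v) = y + (t * a + (1 - t) * b) *\<^sub>R v"
    by (simp add: algebra_simps)
  ultimately have "t *\<^sub>R (y + a *\<^sub>R v) + (1 - t) *\<^sub>R (y + b *\<^sub>R v) = y + r *\<^sub>R v"
    by simp
  moreover have "ball (t *\<^sub>R (y + a *\<^sub>R v) + (1 - t) *\<^sub>R (y + b *\<^sub>R v)) (t * R) \<subseteq> \<Omega>"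
    by (rule convex_ball_towards_closure_subset) (use assms in \<open>auto simp: t_def\<close>)
  ultimately show ?thesis
    using ball_subset_imp_le_bdist[OF assms(1,3)] by (simp add: t_def mult.commute)
qed

lemma convex_segment_in_frontier:
  fixes S :: "'a::euclidean_space set"
  assumes "convex S" "open S" "p \<in> closure S" "q \<in> closure S" "midpoint p q \<notin> S"
  shows "closed_segment p q \<subseteq> frontier S"
proof
  have "S \<noteq> {}" using assms(3) by auto
  then obtain a b where "a \<noteq> 0" "\<forall>x\<in>S. a \<bullet> x \<le> b" "b \<le> a \<bullet> midpoint p q"
    using separating_hyperplane_sets[OF assms(1) convex_singleton, of "midpoint p q"] assms(5) by auto
  then have "S \<subseteq> interior {x. a \<bullet> x \<le> b}" by (intro interior_maximal assms(2)) auto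
  then have S: "S \<subseteq> {x. a \<bullet> x < b}" using interior_halfspace_le[OF \<open>a \<noteq> 0\<close>] by simp
  have "closure S \<subseteq> {x. a \<bullet> x \<le> b}"
    by (rule closure_minimal) (use \<open>\<forall>x\<in>S. a \<bullet> x \<le> b\<close> in \<open>auto simp: closed_halfspace_le\<close>)
  then have le: "a \<bullet> p \<le> b" "a \<bullet> q \<le> b" using assms(3,4) by auto
  have "a \<bullet> midpoint p q = (a \<bullet> p + a \<bullet> q) / 2" by (simp add: midpoint_def inner_add_right)
  then have ab: "a \<bullet> p = b \<and> a \<bullet> q = b" using le \<open>b \<le> a \<bullet> midpoint p q\<close> by auto
  fix z assume z: "z \<in> closed_segment p q"
  then have "z \<in> closure S"
    using closed_segment_subset[OF assms(3,4) convex_closure[OF assms(1)]] by blast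
  moreover obtain u where "z = (1 - u) *\<^sub>R p + u *\<^sub>R q" using z by (auto simp: closed_segment_def)
  then have "a \<bullet> z = (1 - u) * (a \<bullet> p) + u * (a \<bullet> q)" by (simp add: inner_add_right)
  then have "a \<bullet> z = b" using ab by (simp add: algebra_simps)
  then have "z \<notin> S" using S by auto
  ultimately show "z \<in> frontier S" using assms(2) by (simp add: frontier_def interior_open)
qed

lemma tau_plus_first_exit:
  fixes \<Omega> :: "(real^3) set"
  assumes "open \<Omega>" "bounded \<Omega>" "y \<in> \<Omega>" "norm v = 1"
  shows "tau_plus \<Omega> y v > 0" "y + tau_plus \<Omega> y v *\<^sub>R v \<notin> \<Omega>"
    "\<And>t. 0 \<le> t \<Longrightarrow> t < tau_plus \<Omega> y v \<Longrightarrow> y + t *\<^sub>R v \<in> \<Omega>"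
proof -
  define T where "T = {t. t > 0 \<and> y + t *\<^sub>R v \<notin> \<Omega>}"
  define \<tau> where "\<tau> = tau_plus \<Omega> y v"
  have \<tau>_Inf: "\<tau> = Inf T" by (simp add: \<tau>_def tau_plus_def T_def)
  obtain e where e: "e > 0" "ball y e \<subseteq> \<Omega>" using assms openE by blast
  have T_ge: "t \<ge> e" if "t \<in> T" for t
  proof (rule ccontr)
    assume "\<not> t \<ge> e"
    then have "y + t *\<^sub>R v \<in> ball y e" using that assms(4) by (auto simp: T_def dist_norm)
    with e that show False by (auto simp: T_def)
  qed
  obtain B where B: "\<forall>x\<in>\<Omega>. norm x \<le> B" using assms(2) bounded_iff by blast
  have "B + norm y + 1 \<in> T"
  proof -
    have B0: "B \<ge> 0" using B assms(3) norm_ge_zero order_trans by blast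
    then have "norm ((B + norm y + 1) *\<^sub>R v) = B + norm y + 1" using assms(4) by simp
    then have "norm (y + (B + norm y + 1) *\<^sub>R v) \<ge> B + 1"
      using norm_triangle_ineq2[of "(B + norm y + 1) *\<^sub>R v" "-y"] by (simp add: algebra_simps)
    then have "y + (B + norm y + 1) *\<^sub>R v \<notin> \<Omega>" using B by fastforce
    then show ?thesis using B0 by (simp add: T_def add_nonneg_pos)
  qed
  then have "T \<noteq> {}" by auto
  moreover have "closed T"
  proof -
    have T_eq: "T = {e..} \<inter> (\<lambda>t. y + t *\<^sub>R v) -` (- \<Omega>)" using T_ge e by (force simp: T_def)
    show ?thesis unfolding T_eq
      using assms(1) by (intro closed_Int closed_vimage closed_atLeast continuous_intros) auto
  qed
  moreover have bdd: "bdd_below T" by (auto simp: bdd_below_def T_def intro: less_imp_le)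
  ultimately have "\<tau> \<in> T" unfolding \<tau>_Inf by (intro closed_contains_Inf)
  then show "tau_plus \<Omega> y v > 0" "y + tau_plus \<Omega> y v *\<^sub>R v \<notin> \<Omega>" by (simp_all add: T_def \<tau>_def)
  show "y + t *\<^sub>R v \<in> \<Omega>" if "0 \<le> t" "t < tau_plus \<Omega> y v" for t
    using that cInf_lower[OF _ bdd, of t] assms(3) by (cases "t = 0") (auto simp: tau_plus_def T_def)
qed

lemma tau_plus_exit:
  fixes \<Omega> :: "(real^3) set"
  assumes "open \<Omega>" "bounded \<Omega>" "y \<in> \<Omega>" "norm v = 1"
  shows "tau_plus \<Omega> y v > 0" "y + tau_plus \<Omega> y v *\<^sub>R v \<in> frontier \<Omega>"
proof -
  define \<tau> where "\<tau> = tau_plus \<Omega> y v"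
  note exit = tau_plus_first_exit[OF assms, folded \<tau>_def]
  then show "tau_plus \<Omega> y v > 0" by (simp add: \<tau>_def)
  let ?q = "y + \<tau> *\<^sub>R v"
  have "?q \<in> closure \<Omega>"
    unfolding closure_approachable
  proof (intro allI impI)
    fix d :: real assume d: "d > 0"
    define s where "s = min d \<tau> / 2"
    have "y + (\<tau> - s) *\<^sub>R v \<in> \<Omega>" by (rule exit(3)) (use d exit(1) in \<open>auto simp: s_def\<close>)
    moreover have "dist (y + (\<tau> - s) *\<^sub>R v) ?q = s"
      using assms(4) d exit(1) by (simp add: dist_norm algebra_simps s_def)
    moreover have "s < d" using d exit(1) by (simp add: s_def)
    ultimately show "\<exists>x\<in>\<Omega>. dist x ?q < d" by (intro bexI[of _ "y + (\<tau> - s) *\<^sub>R v"]) auto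
  qed
  then show "y + tau_plus \<Omega> y v *\<^sub>R v \<in> frontier \<Omega>"
    using exit(2) assms(1) by (simp add: \<tau>_def frontier_def interior_open)
qed

lemma norm_q_plus_diff:
  fixes \<Omega> :: "(real^3) set"
  assumes "open \<Omega>" "bounded \<Omega>" "y \<in> \<Omega>" "norm v = 1"
  shows "norm (q_plus \<Omega> y v - y) = tau_plus \<Omega> y v"
  using tau_plus_exit(1)[OF assms] assms(4) by (simp add: q_plus_def)

definition uniformly_convex_with :: "real \<Rightarrow> 'a::real_normed_vector set \<Rightarrow> bool" where
  "uniformly_convex_with \<kappa> S \<longleftrightarrow>
     (\<forall>p\<in>frontier S. \<forall>q\<in>frontier S. ball (midpoint p q) (\<kappa> * (dist p q)\<^sup>2) \<subseteq> S)"

lemma uniformly_convex_with_mono: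
  "uniformly_convex_with \<kappa> S \<Longrightarrow> \<kappa>' \<le> \<kappa> \<Longrightarrow> uniformly_convex_with \<kappa>' S"
  unfolding uniformly_convex_with_def
  by (meson order_trans subset_ball mult_right_mono zero_le_power2)

lemma bdist_chord_tent:
  fixes \<Omega> :: "(real^3) set"
  assumes "open \<Omega>" "bounded \<Omega>" "convex \<Omega>" "uniformly_convex_with \<kappa> \<Omega>" "0 \<le> \<kappa>"
    and "y \<in> \<Omega>" "norm v = 1"
    and "- tau_plus \<Omega> y (-v) < r" "r < tau_plus \<Omega> y v"
  shows "2 * \<kappa> * (tau_plus \<Omega> y v + tau_plus \<Omega> y (-v))
           * min (tau_plus \<Omega> y v - r) (r + tau_plus \<Omega> y (-v)) \<le> bdist \<Omega> (y + r *\<^sub>R v)"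
proof -
  define \<tau> \<sigma> where "\<tau> = tau_plus \<Omega> y v" and "\<sigma> = tau_plus \<Omega> y (-v)"
  define L where "L = \<tau> + \<sigma>"
  have "norm (-v) = 1" using assms(7) by simp
  note exit_fwd = tau_plus_exit[OF assms(1,2,6,7)] and exit_bwd = tau_plus_exit[OF assms(1,2,6) this]
  have q: "y + \<tau> *\<^sub>R v \<in> frontier \<Omega>" and p: "y + (-\<sigma>) *\<^sub>R v \<in> frontier \<Omega>"
    using exit_fwd(2) exit_bwd(2) by (simp_all add: \<tau>_def \<sigma>_def)
  have L: "L > 0" using exit_fwd(1) exit_bwd(1) by (simp add: L_def \<tau>_def \<sigma>_def)
  have Fne: "frontier \<Omega> \<noteq> {}" using q by auto
  define rm where "rm = (\<tau> - \<sigma>) / 2"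
  have "midpoint (y + (-\<sigma>) *\<^sub>R v) (y + \<tau> *\<^sub>R v) = y + rm *\<^sub>R v"
    by (simp add: midpoint_def rm_def vec_eq_iff field_simps)
  moreover have "dist (y + (-\<sigma>) *\<^sub>R v) (y + \<tau> *\<^sub>R v) = L"
  proof -
    have "(y + \<tau> *\<^sub>R v) - (y + (-\<sigma>) *\<^sub>R v) = L *\<^sub>R v" by (simp add: L_def algebra_simps)
    then show ?thesis using assms(7) L by (simp add: dist_norm norm_minus_commute)
  qed
  ultimately have ball_mid: "ball (y + rm *\<^sub>R v) (\<kappa> * L\<^sup>2) \<subseteq> \<Omega>"
    using assms(4) p q unfolding uniformly_convex_with_def by metis
  have q_cl: "y + \<tau> *\<^sub>R v \<in> closure \<Omega>" and p_cl: "y + (-\<sigma>) *\<^sub>R v \<in> closure \<Omega>"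
    using p q by (simp_all add: frontier_def)
  have r: "-\<sigma> < r" "r < \<tau>" using assms(8,9) by (simp_all add: \<tau>_def \<sigma>_def)
  have slope: "0 \<le> 2 * \<kappa> * L" using L assms(5) by simp
  have "2 * \<kappa> * L * min (\<tau> - r) (r + \<sigma>) \<le> bdist \<Omega> (y + r *\<^sub>R v)"
  proof (cases "rm \<le> r")
    case True
    have "\<kappa> * L\<^sup>2 * ((\<tau> - r) / (\<tau> - rm)) \<le> bdist \<Omega> (y + r *\<^sub>R v)"
      by (rule bdist_on_line_ge[OF assms(1,3) Fne ball_mid q_cl])
        (use True r L in \<open>simp_all add: rm_def L_def field_simps\<close>)
    moreover have "\<kappa> * L\<^sup>2 * ((\<tau> - r) / (\<tau> - rm)) = 2 * \<kappa> * L * (\<tau> - r)"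
      using L by (simp add: rm_def L_def power2_eq_square field_simps)
    ultimately show ?thesis using slope by (smt (verit) min.cobounded1 mult_left_mono)
  next
    case False
    have "\<kappa> * L\<^sup>2 * ((-\<sigma> - r) / (-\<sigma> - rm)) \<le> bdist \<Omega> (y + r *\<^sub>R v)"
      by (rule bdist_on_line_ge[OF assms(1,3) Fne ball_mid p_cl])
        (use False r L in \<open>simp_all add: rm_def L_def field_simps\<close>)
    moreover have "\<kappa> * L\<^sup>2 * ((-\<sigma> - r) / (-\<sigma> - rm)) = 2 * \<kappa> * L * (r + \<sigma>)"
      using L by (simp add: rm_def L_def power2_eq_square field_simps)
    ultimately show ?thesis using slope by (smt (verit) min.cobounded2 mult_left_mono)
  qed
  then show ?thesis by (simp add: \<tau>_def \<sigma>_def L_def)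
qed

lemma chord_length_le_diam:
  fixes \<Omega> :: "(real^3) set"
  assumes "open \<Omega>" "bounded \<Omega>" "y \<in> \<Omega>" "norm v = 1"
    and diam: "\<And>p q. p \<in> frontier \<Omega> \<Longrightarrow> q \<in> frontier \<Omega> \<Longrightarrow> dist p q \<le> D"
  shows "tau_plus \<Omega> y v + tau_plus \<Omega> y (-v) \<le> D"
proof -
  have "norm (-v) = 1" using assms(4) by simp
  note exit_fwd = tau_plus_exit[OF assms(1-4)] and exit_bwd = tau_plus_exit[OF assms(1-3) this]
  have "(y + tau_plus \<Omega> y v *\<^sub>R v) - (y + tau_plus \<Omega> y (-v) *\<^sub>R (-v))
      = (tau_plus \<Omega> y v + tau_plus \<Omega> y (-v)) *\<^sub>R v"
    by (simp add: algebra_simps)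
  then have "dist (y + tau_plus \<Omega> y v *\<^sub>R v) (y + tau_plus \<Omega> y (-v) *\<^sub>R (-v))
      = tau_plus \<Omega> y v + tau_plus \<Omega> y (-v)"
    using exit_fwd(1) exit_bwd(1) assms(4) by (simp add: dist_norm)
  then show ?thesis using diam[OF exit_fwd(2) exit_bwd(2)] by simp
qed

lemma bdist_chord_cone:
  fixes \<Omega> :: "(real^3) set"
  assumes "open \<Omega>" "bounded \<Omega>" "convex \<Omega>" "y \<in> \<Omega>" "norm v = 1"
    and "0 \<le> r" "r < tau_plus \<Omega> y v"
  shows "bdist \<Omega> y * ((tau_plus \<Omega> y v - r) / tau_plus \<Omega> y v) \<le> bdist \<Omega> (y + r *\<^sub>R v)"
proof -
  note exit = tau_plus_exit[OF assms(1,2,4,5)]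
  have "bdist \<Omega> y * ((tau_plus \<Omega> y v - r) / (tau_plus \<Omega> y v - 0)) \<le> bdist \<Omega> (y + r *\<^sub>R v)"
    by (rule bdist_on_line_ge[OF assms(1,3)])
      (use exit assms(1,4,6,7) ball_bdist_subset[OF assms(1,4)] in \<open>auto simp: frontier_def\<close>)
  then show ?thesis by simp
qed

lemma tent_constant_le:
  fixes \<kappa> L D \<epsilon> :: real
  assumes "0 < \<kappa>" "\<kappa> \<le> 1/2" "0 \<le> \<epsilon>" "\<epsilon> < 1/2" "0 < L" "L \<le> D" "1 \<le> D"
  shows "(2*\<kappa>*L) powr (-1/2+\<epsilon>) * (2 * L powr (-1/2+\<epsilon>+1) / (-1/2+\<epsilon>+1))
      \<le> 4 * (2*\<kappa>) powr (-1/2) * D"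
proof -
  have "(2*\<kappa>*L) powr (-1/2+\<epsilon>) * L powr (-1/2+\<epsilon>+1) = (2*\<kappa>) powr (-1/2+\<epsilon>) * L powr (2*\<epsilon>)"
    using assms by (simp add: powr_mult mult.assoc powr_add[symmetric])
  also have "\<dots> \<le> (2*\<kappa>) powr (-1/2) * D powr 1"
  proof (intro mult_mono)
    show "(2*\<kappa>) powr (-1/2+\<epsilon>) \<le> (2*\<kappa>) powr (-1/2)"
      by (rule powr_mono') (use assms in auto)
    have "L powr (2*\<epsilon>) \<le> D powr (2*\<epsilon>)" by (rule powr_mono2) (use assms in auto)
    also have "\<dots> \<le> D powr 1" by (rule powr_mono) (use assms in auto)
    finally show "L powr (2*\<epsilon>) \<le> D powr 1" .
  qed auto
  finally have main: "(2*\<kappa>*L) powr (-1/2+\<epsilon>) * L powr (-1/2+\<epsilon>+1) \<le> (2*\<kappa>) powr (-1/2) * D"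
    using assms by simp
  have "2 / (-1/2+\<epsilon>+1) \<le> 4" using assms by (simp add: field_simps)
  from mult_mono[OF this main] have "2 / (-1/2+\<epsilon>+1) * ((2*\<kappa>*L) powr (-1/2+\<epsilon>) * L powr (-1/2+\<epsilon>+1))
      \<le> 4 * ((2*\<kappa>) powr (-1/2) * D)"
    using assms by simp
  then show ?thesis by (simp add: mult.assoc mult.left_commute[of _ 2])
qed

lemma tent_weighted_constant_le:
  fixes A L \<delta> \<kappa> \<epsilon> :: real
  assumes "A > 0" "L > 0" "\<delta> > 0" "\<kappa> > 0" "0 < \<epsilon>" "\<epsilon> < 1/2"
    and "\<delta> \<le> A * L" "\<kappa> * L\<^sup>2 \<le> A * L"
  shows "A powr (-1+\<epsilon>) * L powr \<epsilon> \<le> \<kappa> powr (-1/2) * \<delta> powr (-1/2+\<epsilon>)"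
proof -
  have AL: "A * L > 0" using assms by simp
  have "L powr \<epsilon> = L powr (-1+\<epsilon>) * L" using powr_add[of L "-1+\<epsilon>" 1] assms by simp
  then have "A powr (-1+\<epsilon>) * L powr \<epsilon> = (A * L) powr (-1+\<epsilon>) * L"
    using assms by (simp add: powr_mult)
  also have "(A * L) powr (-1+\<epsilon>) = (A * L) powr (-1/2+\<epsilon>) * (A * L) powr (-1/2)"
    using AL by (simp add: powr_add[symmetric])
  finally have split: "A powr (-1+\<epsilon>) * L powr \<epsilon> = (A * L) powr (-1/2+\<epsilon>) * (A * L) powr (-1/2) * L" .
  have "(A * L) powr (-1/2+\<epsilon>) \<le> \<delta> powr (-1/2+\<epsilon>)"
    by (rule powr_mono2') (use assms in auto)
  moreover have "(A * L) powr (-1/2) \<le> (\<kappa> * L\<^sup>2) powr (-1/2)"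
    by (rule powr_mono2') (use assms in auto)
  moreover have "(\<kappa> * L\<^sup>2) powr (-1/2) = \<kappa> powr (-1/2) / L"
  proof -
    have "(\<kappa> * L\<^sup>2) powr (-1/2) = \<kappa> powr (-1/2) * (L powr 2) powr (-1/2)"
      using assms by (simp add: powr_mult powr_realpow)
    also have "(L powr 2) powr (-1/2) = L powr (-1)" by (simp add: powr_powr)
    finally show ?thesis using assms by simp
  qed
  ultimately have "(A * L) powr (-1/2+\<epsilon>) * (A * L) powr (-1/2) * L
      \<le> \<delta> powr (-1/2+\<epsilon>) * (\<kappa> powr (-1/2) / L) * L"
    using assms(2) by (intro mult_right_mono mult_mono) auto
  with split show ?thesis using assms by (simp add: ac_simps)
qed

lemma chord_integral_bdist_powr_le:
  fixes \<Omega> :: "(real^3) set"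
  assumes "open \<Omega>" "bounded \<Omega>" "convex \<Omega>" "uniformly_convex_with \<kappa> \<Omega>" "0 < \<kappa>" "\<kappa> \<le> 1/2"
    and diam: "\<And>p q. p \<in> frontier \<Omega> \<Longrightarrow> q \<in> frontier \<Omega> \<Longrightarrow> dist p q \<le> D" and "1 \<le> D"
    and "y \<in> \<Omega>" "norm v = 1" "0 \<le> \<epsilon>" "\<epsilon> < 1/2"
  shows "(\<integral>\<^sup>+ r. indicator {0..norm (q_plus \<Omega> y v - y)} r *
            ennreal (bdist \<Omega> (y + r *\<^sub>R v) powr (-1/2 + \<epsilon>)) \<partial>lborel)
         \<le> ennreal (4 * (2*\<kappa>) powr (-1/2) * D)"
proof -
  define \<tau> \<sigma> where "\<tau> = tau_plus \<Omega> y v" and "\<sigma> = tau_plus \<Omega> y (-v)"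
  define g where "g r = bdist \<Omega> (y + r *\<^sub>R v)" for r
  have "norm (-v) = 1" using assms(10) by simp
  note exit_fwd = tau_plus_exit[OF assms(1,2,9,10)] and exit_bwd = tau_plus_exit[OF assms(1,2,9) this]
  have \<tau>: "\<tau> > 0" and \<sigma>: "\<sigma> > 0" using exit_fwd(1) exit_bwd(1) by (simp_all add: \<tau>_def \<sigma>_def)
  have LD: "\<tau> + \<sigma> \<le> D"
    unfolding \<tau>_def \<sigma>_def by (rule chord_length_le_diam[OF assms(1,2,9,10) diam])
  have tent: "2 * \<kappa> * (\<tau> + \<sigma>) * min (\<tau> - r) (r - (-\<sigma>)) \<le> g r" if "0 \<le> r" "r < \<tau>" for r
    using bdist_chord_tent[OF assms(1-4) _ assms(9,10), of r] that \<sigma> assms(5)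
    by (simp add: g_def \<tau>_def \<sigma>_def)
  have "g \<tau> = 0" using exit_fwd(2) by (simp add: g_def \<tau>_def frontier_imp_bdist_eq_0)
  then have "(\<integral>\<^sup>+ r. indicator {0..\<tau>} r * ennreal (g r powr (-1/2 + \<epsilon>)) \<partial>lborel)
      \<le> ennreal ((2*\<kappa>*(\<tau>+\<sigma>)) powr (-1/2+\<epsilon>) * (2 * (\<tau> - (-\<sigma>)) powr (-1/2+\<epsilon>+1) / (-1/2+\<epsilon>+1)))"
    by (intro nn_integral_powr_tent_le tent) (use \<tau> \<sigma> assms(5,11,12) in auto)
  also have "\<dots> \<le> ennreal (4 * (2*\<kappa>) powr (-1/2) * D)"
    using tent_constant_le[of \<kappa> \<epsilon> "\<tau> + \<sigma>" D] \<tau> \<sigma> LD assms(5,6,8,11,12)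
    by (intro ennreal_leI) simp
  finally show ?thesis
    using norm_q_plus_diff[OF assms(1,2,9,10)] by (simp add: g_def \<tau>_def)
qed

lemma tent_or_cone_slope:
  fixes \<tau> \<sigma> \<delta> \<kappa> :: real and g :: "real \<Rightarrow> real"
  assumes "0 < \<tau>" "0 < \<sigma>" "0 < \<delta>" "0 < \<kappa>"
    and tent: "\<And>r. 0 \<le> r \<Longrightarrow> r < \<tau> \<Longrightarrow> 2 * \<kappa> * (\<tau> + \<sigma>) * min (\<tau> - r) (r + \<sigma>) \<le> g r"
    and cone: "\<And>r. 0 \<le> r \<Longrightarrow> r < \<tau> \<Longrightarrow> \<delta> * ((\<tau> - r) / \<tau>) \<le> g r"
  obtains A where "A > 0" "\<delta> \<le> A * (\<tau> + \<sigma>)" "\<kappa> * (\<tau> + \<sigma>)\<^sup>2 \<le> A * (\<tau> + \<sigma>)"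
    "\<And>r. 0 \<le> r \<Longrightarrow> r < \<tau> \<Longrightarrow> A * min (\<tau> - r) (r + \<sigma>) \<le> g r"
proof (cases "\<kappa> * (\<tau> + \<sigma>)\<^sup>2 \<le> \<delta>")
  case True
  show ?thesis
  proof (rule that[of "\<delta> / \<tau>"])
    show "\<delta> / \<tau> > 0" "\<delta> \<le> \<delta> / \<tau> * (\<tau> + \<sigma>)" using assms(1-3) by (simp_all add: field_simps)
    then show "\<kappa> * (\<tau> + \<sigma>)\<^sup>2 \<le> \<delta> / \<tau> * (\<tau> + \<sigma>)" using True by linarith
    fix r assume r: "0 \<le> r" "r < \<tau>"
    have "\<delta> / \<tau> * min (\<tau> - r) (r + \<sigma>) \<le> \<delta> / \<tau> * (\<tau> - r)"
      using assms(1,3) by (intro mult_left_mono) auto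
    also have "\<dots> \<le> g r" using cone[OF r] by simp
    finally show "\<delta> / \<tau> * min (\<tau> - r) (r + \<sigma>) \<le> g r" .
  qed
next
  case False
  have "0 \<le> \<kappa> * (\<tau> + \<sigma>)\<^sup>2" using assms(4) by simp
  then have "\<kappa> * (\<tau> + \<sigma>)\<^sup>2 \<le> 2 * (\<kappa> * (\<tau> + \<sigma>)\<^sup>2)" by linarith
  also have "\<dots> = 2 * \<kappa> * (\<tau> + \<sigma>) * (\<tau> + \<sigma>)" by (simp only: power2_eq_square mult.assoc)
  finally have "\<kappa> * (\<tau> + \<sigma>)\<^sup>2 \<le> 2 * \<kappa> * (\<tau> + \<sigma>) * (\<tau> + \<sigma>)" .
  then show ?thesis using that[of "2 * \<kappa> * (\<tau> + \<sigma>)"] tent False assms by simp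
qed

lemma chord_integral_bdist_powr_le_weighted:
  fixes \<Omega> :: "(real^3) set"
  assumes "open \<Omega>" "bounded \<Omega>" "convex \<Omega>" "uniformly_convex_with \<kappa> \<Omega>" "0 < \<kappa>"
    and "y \<in> \<Omega>" "norm v = 1" "0 < \<epsilon>" "\<epsilon> < 1/2"
  shows "(\<integral>\<^sup>+ r. indicator {0..norm (q_plus \<Omega> y v - y)} r *
            ennreal (bdist \<Omega> (y + r *\<^sub>R v) powr (-1 + \<epsilon>)) \<partial>lborel)
         \<le> ennreal (2 * \<kappa> powr (-1/2) / \<epsilon> * bdist \<Omega> y powr (-1/2 + \<epsilon>))"
proof -
  define \<tau> \<sigma> \<delta> where "\<tau> = tau_plus \<Omega> y v" and "\<sigma> = tau_plus \<Omega> y (-v)" and "\<delta> = bdist \<Omega> y"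
  define g where "g r = bdist \<Omega> (y + r *\<^sub>R v)" for r
  have "norm (-v) = 1" using assms(7) by simp
  note exit_fwd = tau_plus_exit[OF assms(1,2,6,7)] and exit_bwd = tau_plus_exit[OF assms(1,2,6) this]
  have \<tau>: "\<tau> > 0" and \<sigma>: "\<sigma> > 0" using exit_fwd(1) exit_bwd(1) by (simp_all add: \<tau>_def \<sigma>_def)
  have \<delta>: "\<delta> > 0" unfolding \<delta>_def using exit_fwd(2) by (intro bdist_pos[OF assms(1,6)]) auto
  obtain A where A: "A > 0" "\<delta> \<le> A * (\<tau> + \<sigma>)" "\<kappa> * (\<tau> + \<sigma>)\<^sup>2 \<le> A * (\<tau> + \<sigma>)"
    and A_tent: "\<And>r. 0 \<le> r \<Longrightarrow> r < \<tau> \<Longrightarrow> A * min (\<tau> - r) (r + \<sigma>) \<le> g r"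
  proof (rule tent_or_cone_slope[OF \<tau> \<sigma> \<delta> assms(5)])
    show "2 * \<kappa> * (\<tau> + \<sigma>) * min (\<tau> - r) (r + \<sigma>) \<le> g r" if "0 \<le> r" "r < \<tau>" for r
      using bdist_chord_tent[OF assms(1-4) _ assms(6,7), of r] that \<sigma> assms(5)
      by (simp add: g_def \<tau>_def \<sigma>_def)
    show "\<delta> * ((\<tau> - r) / \<tau>) \<le> g r" if "0 \<le> r" "r < \<tau>" for r
      using bdist_chord_cone[OF assms(1-3,6,7) that[unfolded \<tau>_def]] by (simp add: g_def \<delta>_def \<tau>_def)
  qed blast
  have "g \<tau> = 0" using exit_fwd(2) by (simp add: g_def \<tau>_def frontier_imp_bdist_eq_0)
  then have "(\<integral>\<^sup>+ r. indicator {0..\<tau>} r * ennreal (g r powr (-1 + \<epsilon>)) \<partial>lborel)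
      \<le> ennreal (A powr (-1+\<epsilon>) * (2 * (\<tau> - (-\<sigma>)) powr (-1+\<epsilon>+1) / (-1+\<epsilon>+1)))"
    by (intro nn_integral_powr_tent_le) (use \<tau> \<sigma> A A_tent assms(8,9) in auto)
  also have "\<dots> = ennreal (2 / \<epsilon> * (A powr (-1+\<epsilon>) * (\<tau> + \<sigma>) powr \<epsilon>))"
    by (simp add: mult.left_commute)
  also have "\<dots> \<le> ennreal (2 / \<epsilon> * (\<kappa> powr (-1/2) * \<delta> powr (-1/2+\<epsilon>)))"
    using tent_weighted_constant_le[OF A(1) _ \<delta> assms(5,8,9) A(2,3)] \<tau> \<sigma> assms(8)
    by (intro ennreal_leI mult_left_mono) auto
  finally show ?thesis
    using norm_q_plus_diff[OF assms(1,2,6,7)] by (simp add: g_def \<tau>_def \<delta>_def mult_ac)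
qed

section \<open>Second-order calculus\<close>

lemma norm_matrix_vector_mult_le:
  fixes A :: "real^'n^'m"
  shows "norm (A *v x) \<le> real CARD('m) * real CARD('n) * norm A * norm x"
proof -
  have "onorm ((*v) A) \<le> real CARD('m) * real CARD('n) * norm A"
    by (rule onorm_le_matrix_component) (rule order_trans[OF component_le_norm_cart Finite_Cartesian_Product.norm_nth_le])
  then show ?thesis
    using onorm[OF matrix_vector_mul_bounded_linear, of A x] by (meson mult_right_mono norm_ge_zero order_trans)
qed

lemma abs_inner_matrix_vector_le:
  fixes A :: "real^'n^'m"
  shows "\<bar>a \<bullet> (A *v b)\<bar> \<le> real CARD('m) * real CARD('n) * norm A * norm a * norm b"
proof -
  have "\<bar>a \<bullet> (A *v b)\<bar> \<le> norm a * norm (A *v b)" by (rule Cauchy_Schwarz_ineq2)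
  also have "\<dots> \<le> norm a * (real CARD('m) * real CARD('n) * norm A * norm b)"
    by (intro mult_left_mono norm_matrix_vector_mult_le) auto
  finally show ?thesis by (simp add: mult_ac)
qed

lemma matrix_vector_mult_uminus_right: "(A :: 'a::ring_1^'n^'m) *v (- x) = - (A *v x)"
  by (simp add: matrix_vector_mult_def vec_eq_iff sum_negf)

lemma bounded_bilinear_matrix_vector_mult: "bounded_bilinear ((*v) :: real^'n^'m \<Rightarrow> _)"
proof
  show "\<exists>K. \<forall>A x. norm ((A :: real^'n^'m) *v x) \<le> norm A * norm x * K"
    using norm_matrix_vector_mult_le by (metis mult.commute mult.left_commute)
qed (simp_all add: matrix_vector_mult_add_rdistrib matrix_vector_right_distrib
      matrix_vector_mult_scaleR scaleR_matrix_vector_assoc)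

lemmas continuous_on_matrix_vector_mult[continuous_intros] =
  bounded_bilinear.continuous_on[OF bounded_bilinear_matrix_vector_mult]

lemma has_real_derivative_along_line:
  fixes \<rho> :: "real^'n \<Rightarrow> real"
  assumes "(\<rho> has_derivative (\<lambda>h. grad \<bullet> h)) (at (x + t *\<^sub>R h))"
  shows "((\<lambda>t. \<rho> (x + t *\<^sub>R h)) has_real_derivative (grad \<bullet> h)) (at t)"
proof -
  have "((\<lambda>t. x + t *\<^sub>R h) has_derivative (\<lambda>u. u *\<^sub>R h)) (at t)"
    by (auto intro!: derivative_eq_intros)
  from diff_chain_at[OF this assms] show ?thesis
    unfolding has_field_derivative_def comp_def by (simp add: mult.commute[of _ "grad \<bullet> h"] fun_eq_iff)
qed

lemma has_real_derivative_grad_along_line: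
  fixes grad :: "real^'n \<Rightarrow> real^'n"
  assumes "(grad has_derivative (\<lambda>h. H *v h)) (at (x + t *\<^sub>R h))"
  shows "((\<lambda>t. grad (x + t *\<^sub>R h) \<bullet> k) has_real_derivative ((H *v h) \<bullet> k)) (at t)"
proof -
  have "((\<lambda>t. x + t *\<^sub>R h) has_derivative (\<lambda>u. u *\<^sub>R h)) (at t)"
    by (auto intro!: derivative_eq_intros)
  from diff_chain_at[OF this assms]
  have "((\<lambda>t. grad (x + t *\<^sub>R h)) has_derivative (\<lambda>u. u *\<^sub>R (H *v h))) (at t)"
    by (simp add: comp_def matrix_vector_mult_scaleR)
  from bounded_linear.has_derivative[OF bounded_linear_inner_left this, of k] show ?thesis
    unfolding has_field_derivative_def by (simp add: mult.commute[of _ "(H *v h) \<bullet> k"])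
qed

lemma second_difference_mean_value:
  fixes \<rho> :: "real^'n \<Rightarrow> real"
  assumes d1: "\<And>x. x \<in> U \<Longrightarrow> (\<rho> has_derivative (\<lambda>h. grad x \<bullet> h)) (at x)"
    and d2: "\<And>x. x \<in> U \<Longrightarrow> (grad has_derivative (\<lambda>h. hess x *v h)) (at x)"
    and s: "s > 0" and box: "cball x (s * (norm a + norm b)) \<subseteq> U"
  obtains \<xi> where "dist \<xi> x \<le> s * (norm a + norm b)"
    "\<rho> (x + s *\<^sub>R a + s *\<^sub>R b) - \<rho> (x + s *\<^sub>R a) - \<rho> (x + s *\<^sub>R b) + \<rho> x = s\<^sup>2 * (a \<bullet> (hess \<xi> *v b))"
proof -
  have near: "dist (x + t *\<^sub>R a + u *\<^sub>R b) x \<le> s * (norm a + norm b)"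
    if "0 \<le> t" "t \<le> s" "0 \<le> u" "u \<le> s" for t u
  proof -
    have "norm (t *\<^sub>R a + u *\<^sub>R b) \<le> t * norm a + u * norm b"
      using that by (metis abs_of_nonneg norm_scaleR norm_triangle_ineq)
    also have "\<dots> \<le> s * norm a + s * norm b" using that by (intro add_mono mult_right_mono) auto
    finally show ?thesis by (simp add: dist_norm distrib_left add.assoc)
  qed
  have inU: "x + t *\<^sub>R a + u *\<^sub>R b \<in> U" if "0 \<le> t" "t \<le> s" "0 \<le> u" "u \<le> s" for t u
    using near[OF that] box by (auto simp: dist_commute)
  have "\<exists>t1>0. t1 < s \<and>
      (\<rho> (x + s *\<^sub>R b + s *\<^sub>R a) - \<rho> (x + s *\<^sub>R a)) - (\<rho> (x + s *\<^sub>R b + 0 *\<^sub>R a) - \<rho> (x + 0 *\<^sub>R a))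
       = (s - 0) * (grad (x + s *\<^sub>R b + t1 *\<^sub>R a) \<bullet> a - grad (x + t1 *\<^sub>R a) \<bullet> a)"
  proof (rule MVT2[OF s])
    fix t assume "0 \<le> t" "t \<le> s"
    then have "x + s *\<^sub>R b + t *\<^sub>R a \<in> U" "x + t *\<^sub>R a \<in> U"
      using inU[of t s] inU[of t 0] s by (simp_all add: algebra_simps)
    then show "((\<lambda>t. \<rho> (x + s *\<^sub>R b + t *\<^sub>R a) - \<rho> (x + t *\<^sub>R a)) has_real_derivative
        grad (x + s *\<^sub>R b + t *\<^sub>R a) \<bullet> a - grad (x + t *\<^sub>R a) \<bullet> a) (at t)"
      by (intro DERIV_diff has_real_derivative_along_line d1)
  qed
  then obtain t1 where t1: "0 < t1" "t1 < s"
    "\<rho> (x + s *\<^sub>R b + s *\<^sub>R a) - \<rho> (x + s *\<^sub>R a) - (\<rho> (x + s *\<^sub>R b) - \<rho> x)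
       = s * (grad (x + s *\<^sub>R b + t1 *\<^sub>R a) \<bullet> a - grad (x + t1 *\<^sub>R a) \<bullet> a)"
    by auto
  have "\<exists>u1>0. u1 < s \<and> grad (x + t1 *\<^sub>R a + s *\<^sub>R b) \<bullet> a - grad (x + t1 *\<^sub>R a + 0 *\<^sub>R b) \<bullet> a
       = (s - 0) * ((hess (x + t1 *\<^sub>R a + u1 *\<^sub>R b) *v b) \<bullet> a)"
  proof (rule MVT2[OF s])
    fix u assume "0 \<le> u" "u \<le> s"
    then show "((\<lambda>u. grad (x + t1 *\<^sub>R a + u *\<^sub>R b) \<bullet> a) has_real_derivative
        (hess (x + t1 *\<^sub>R a + u *\<^sub>R b) *v b) \<bullet> a) (at u)"
      using inU[of t1 u] t1 by (intro has_real_derivative_grad_along_line d2) auto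
  qed
  then obtain u1 where u1: "0 < u1" "u1 < s"
    "grad (x + t1 *\<^sub>R a + s *\<^sub>R b) \<bullet> a - grad (x + t1 *\<^sub>R a) \<bullet> a
       = s * ((hess (x + t1 *\<^sub>R a + u1 *\<^sub>R b) *v b) \<bullet> a)"
    by auto
  show ?thesis
  proof (rule that)
    show "dist (x + t1 *\<^sub>R a + u1 *\<^sub>R b) x \<le> s * (norm a + norm b)"
      using t1 u1 by (intro near) auto
    show "\<rho> (x + s *\<^sub>R a + s *\<^sub>R b) - \<rho> (x + s *\<^sub>R a) - \<rho> (x + s *\<^sub>R b) + \<rho> x
        = s\<^sup>2 * (a \<bullet> (hess (x + t1 *\<^sub>R a + u1 *\<^sub>R b) *v b))"
      using t1(3) u1(3) by (simp add: algebra_simps power2_eq_square inner_commute)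
  qed
qed

text \<open>Schwarz's theorem: both orders of the mixed second difference quotient tend to the Hessian.\<close>
lemma hessian_symmetric:
  fixes \<rho> :: "real^'n \<Rightarrow> real"
  assumes "open U"
    and d1: "\<And>x. x \<in> U \<Longrightarrow> (\<rho> has_derivative (\<lambda>h. grad x \<bullet> h)) (at x)"
    and d2: "\<And>x. x \<in> U \<Longrightarrow> (grad has_derivative (\<lambda>h. hess x *v h)) (at x)"
    and "continuous_on U hess" "x \<in> U"
  shows "a \<bullet> (hess x *v b) = b \<bullet> (hess x *v a)"
proof (rule ccontr)
  define M N where "M \<xi> = a \<bullet> (hess \<xi> *v b)" and "N \<xi> = b \<bullet> (hess \<xi> *v a)" for \<xi>
  assume "a \<bullet> (hess x *v b) \<noteq> b \<bullet> (hess x *v a)"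
  then have \<eta>: "\<bar>M x - N x\<bar> / 2 > 0" by (simp add: M_def N_def)
  have "continuous_on U M" "continuous_on U N"
    unfolding M_def N_def using assms(4) by (auto intro!: continuous_intros)
  then have "isCont M x" "isCont N x"
    using assms(1,5) continuous_on_eq_continuous_at by blast+
  then obtain dM dN where
      dM: "dM > 0" "\<And>\<xi>. dist \<xi> x < dM \<Longrightarrow> dist (M \<xi>) (M x) < \<bar>M x - N x\<bar> / 2" and
      dN: "dN > 0" "\<And>\<xi>. dist \<xi> x < dN \<Longrightarrow> dist (N \<xi>) (N x) < \<bar>M x - N x\<bar> / 2"
    using \<eta> unfolding continuous_at_eps_delta by blast
  define d where "d = min dM dN"
  have d: "d > 0" "\<And>\<xi>. dist \<xi> x < d \<Longrightarrow> dist (M \<xi>) (M x) < \<bar>M x - N x\<bar> / 2"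
      "\<And>\<xi>. dist \<xi> x < d \<Longrightarrow> dist (N \<xi>) (N x) < \<bar>M x - N x\<bar> / 2"
    using dM dN by (auto simp: d_def)
  obtain r where r: "r > 0" "cball x r \<subseteq> U" using assms(1,5) open_contains_cball by blast
  define c where "c = norm a + norm b + 1"
  have c: "c > 0" by (simp add: c_def add_nonneg_pos)
  define s where "s = min d r / (2 * c)"
  have s: "s > 0" using d r c by (simp add: s_def)
  have "s * (norm a + norm b) \<le> s * c" using s by (simp add: c_def)
  also have "\<dots> = min d r / 2" using c by (simp add: s_def)
  also have "\<dots> < min d r" using d(1) r(1) by (simp add: min_def)
  finally have small: "s * (norm a + norm b) < min d r" .
  then have box: "cball x (s * (norm a + norm b)) \<subseteq> U" "cball x (s * (norm b + norm a)) \<subseteq> U"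
    using r by (auto simp: add.commute)
  obtain \<xi>1 where \<xi>1: "dist \<xi>1 x \<le> s * (norm a + norm b)"
    "\<rho> (x + s *\<^sub>R a + s *\<^sub>R b) - \<rho> (x + s *\<^sub>R a) - \<rho> (x + s *\<^sub>R b) + \<rho> x = s\<^sup>2 * M \<xi>1"
    using second_difference_mean_value[OF d1 d2 s box(1)] unfolding M_def by blast
  obtain \<xi>2 where \<xi>2: "dist \<xi>2 x \<le> s * (norm b + norm a)"
    "\<rho> (x + s *\<^sub>R b + s *\<^sub>R a) - \<rho> (x + s *\<^sub>R b) - \<rho> (x + s *\<^sub>R a) + \<rho> x = s\<^sup>2 * N \<xi>2"
    using second_difference_mean_value[OF d1 d2 s box(2)] unfolding N_def by blast
  have "s\<^sup>2 * M \<xi>1 = s\<^sup>2 * N \<xi>2" using \<xi>1(2) \<xi>2(2) by (simp add: algebra_simps)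
  then have "M \<xi>1 = N \<xi>2" using s by simp
  moreover have "dist (M \<xi>1) (M x) < \<bar>M x - N x\<bar> / 2" "dist (N \<xi>2) (N x) < \<bar>M x - N x\<bar> / 2"
    using d(2)[of \<xi>1] d(3)[of \<xi>2] \<xi>1(1) \<xi>2(1) small by (simp_all add: add.commute)
  ultimately have "dist (M x) (N x) < \<bar>M x - N x\<bar>"
    by (metis dist_commute dist_triangle_half_l)
  then show False by (simp add: dist_real_def)
qed

lemma taylor_second_order:
  fixes \<rho> :: "real^'n \<Rightarrow> real"
  assumes d1: "\<And>x. x \<in> U \<Longrightarrow> (\<rho> has_derivative (\<lambda>h. grad x \<bullet> h)) (at x)"
    and d2: "\<And>x. x \<in> U \<Longrightarrow> (grad has_derivative (\<lambda>h. hess x *v h)) (at x)"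
    and seg: "\<And>t. 0 \<le> t \<Longrightarrow> t \<le> 1 \<Longrightarrow> x + t *\<^sub>R h \<in> U"
  obtains \<xi> where "0 < \<xi>" "\<xi> < 1"
    "\<rho> (x + h) = \<rho> x + grad x \<bullet> h + (1/2) * ((hess (x + \<xi> *\<^sub>R h) *v h) \<bullet> h)"
proof -
  define D where "D m t = (if m = 0 then \<rho> (x + t *\<^sub>R h) else if m = 1 then grad (x + t *\<^sub>R h) \<bullet> h
     else (hess (x + t *\<^sub>R h) *v h) \<bullet> h)" for m :: nat and t
  have "\<exists>t>0. t < 1 \<and> D 0 1 = (\<Sum>m<2. D m 0 / fact m * (1 - 0) ^ m) + D 2 t / fact 2 * (1 - 0) ^ 2"
  proof (rule Taylor_up[of 2 D "D 0" 0 1 0])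
    show "\<forall>m t. m < 2 \<and> 0 \<le> t \<and> t \<le> 1 \<longrightarrow> (D m has_real_derivative D (Suc m) t) (at t)"
    proof (intro allI impI)
      fix m :: nat and t :: real assume mt: "m < 2 \<and> 0 \<le> t \<and> t \<le> 1"
      then have xt: "x + t *\<^sub>R h \<in> U" using seg by auto
      have "m = 0 \<or> m = 1" using mt by auto
      moreover have "D 0 = (\<lambda>t. \<rho> (x + t *\<^sub>R h))" "D 1 = (\<lambda>t. grad (x + t *\<^sub>R h) \<bullet> h)"
        by (simp_all add: D_def fun_eq_iff)
      ultimately show "(D m has_real_derivative D (Suc m) t) (at t)"
        using has_real_derivative_along_line[OF d1[OF xt]]
          has_real_derivative_grad_along_line[OF d2[OF xt], of h] by (auto simp: D_def)
    qed
  qed auto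
  then obtain t where "0 < t" "t < 1"
    "D 0 1 = (\<Sum>m<2. D m 0 / fact m * (1 - 0) ^ m) + D 2 t / fact 2 * (1 - 0) ^ 2" by blast
  then show ?thesis by (intro that[of t]) (simp_all add: D_def numeral_2_eq_2)
qed

lemma adjugate_form_cross3:
  fixes H :: "real^3^3" and a b c d :: "real^3"
  shows "(\<Sum>i\<in>UNIV. \<Sum>j\<in>UNIV. cross3 a b $ i * cross3 c d $ j * cof3 H i j)
     = (a \<bullet> (H *v c)) * (b \<bullet> (H *v d)) - (a \<bullet> (H *v d)) * (b \<bullet> (H *v c))"
proof -
  have mod3: "(1::3) + 1 = 2" "(1::3) + 2 = 3" "(2::3) + 1 = 3" "(2::3) + 2 = 1" "(3::3) + 1 = 1"
    "(3::3) + 2 = 2" "(4::3) = 1" "(5::3) = 2"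
    by simp_all
  show ?thesis
    unfolding cof3_def cross3_def inner_vec_def matrix_vector_mult_def
    by (simp add: sum_3 mod3 algebra_simps)
qed

text \<open>A symmetric form that is \<open>\<mu>\<close>-coercive on the hyperplane \<open>g\<^sup>\<bottom>\<close> is \<open>\<mu>/2\<close>-coercive up to a
  multiple of the squared normal component; the cross term is absorbed by AM-GM.\<close>
lemma quadratic_form_ge_tangential:
  fixes H :: "real^'n^'n" and g h :: "real^'n"
  assumes sym: "\<And>a b. a \<bullet> (H *v b) = b \<bullet> (H *v a)" and "g \<noteq> 0"
    and bound: "\<And>a b. \<bar>a \<bullet> (H *v b)\<bar> \<le> B * norm a * norm b"
    and coercive: "\<And>w. w \<bullet> g = 0 \<Longrightarrow> \<mu> * (norm w)\<^sup>2 \<le> (H *v w) \<bullet> w" and "\<mu> > 0"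
  shows "(\<mu>/2) * (norm h)\<^sup>2 - (\<mu>/2 + 2*B\<^sup>2/\<mu> + B) * ((h \<bullet> g)\<^sup>2 / (norm g)\<^sup>2) \<le> (H *v h) \<bullet> h"
proof -
  define n where "n = (1 / norm g) *\<^sub>R g"
  have n: "n \<bullet> n = 1" "norm n = 1" using assms(2) by (simp_all add: n_def dot_square_norm)
  define t where "t = h \<bullet> n"
  define w where "w = h - t *\<^sub>R n"
  have h: "h = w + t *\<^sub>R n" by (simp add: w_def)
  have wn: "w \<bullet> n = 0" by (simp add: w_def t_def inner_diff_left n)
  then have "w \<bullet> g = 0" using assms(2) by (simp add: n_def)
  then have Qw: "\<mu> * (norm w)\<^sup>2 \<le> (H *v w) \<bullet> w" by (rule coercive)
  have norm_h: "(norm h)\<^sup>2 = (norm w)\<^sup>2 + t\<^sup>2"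
    unfolding dot_square_norm[symmetric] h
    using wn by (simp add: inner_add_left inner_add_right inner_commute n power2_eq_square)
  have Qh: "(H *v h) \<bullet> h = (H *v w) \<bullet> w + 2 * t * (n \<bullet> (H *v w)) + t\<^sup>2 * (n \<bullet> (H *v n))"
    using sym[of n w] unfolding h
    by (simp add: matrix_vector_right_distrib matrix_vector_mult_scaleR inner_add_left
        inner_add_right inner_commute algebra_simps power2_eq_square)
  have "\<bar>2 * t * (n \<bullet> (H *v w))\<bar> \<le> 2 * B * (\<bar>t\<bar> * norm w)"
    using mult_left_mono[OF bound[of n w], of "2 * \<bar>t\<bar>"] n by (simp add: abs_mult mult_ac)
  moreover have "\<bar>t\<^sup>2 * (n \<bullet> (H *v n))\<bar> \<le> B * t\<^sup>2"
    using mult_left_mono[OF bound[of n n], of "t\<^sup>2"] n by (simp add: abs_mult mult.commute)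
  moreover have amgm: "2 * B * (\<bar>t\<bar> * norm w) \<le> (\<mu>/2) * (norm w)\<^sup>2 + (2 * B\<^sup>2 / \<mu>) * t\<^sup>2"
  proof -
    have "0 \<le> (\<mu>/2) * (norm w - 2 * B * \<bar>t\<bar> / \<mu>)\<^sup>2" using assms(5) by simp
    also have "\<dots> = (\<mu>/2) * (norm w)\<^sup>2 - 2 * B * (\<bar>t\<bar> * norm w) + (2 * B\<^sup>2 / \<mu>) * t\<^sup>2"
      using assms(5) by (simp add: power2_eq_square field_simps)
    finally show ?thesis by simp
  qed
  moreover have "(h \<bullet> g)\<^sup>2 / (norm g)\<^sup>2 = t\<^sup>2"
    using assms(2) by (simp add: t_def n_def power2_eq_square)
  ultimately show ?thesis using Qh Qw norm_h by (simp add: algebra_simps)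
qed

section \<open>Uniform convexity of positively curved domains\<close>

locale pos_curved_convex_domain =
  fixes \<Omega> :: "(real^3) set" and U :: "(real^3) set" and \<rho> :: "real^3 \<Rightarrow> real"
    and grad :: "real^3 \<Rightarrow> real^3" and hess :: "real^3 \<Rightarrow> real^3^3"
  assumes open_domain: "open \<Omega>" and bounded_domain: "bounded \<Omega>" and convex_domain: "convex \<Omega>"
    and nonempty_domain: "\<Omega> \<noteq> {}"
    and defining_function: "C2_defining_function \<Omega> U \<rho> grad hess"
    and gauss_curvature_pos: "\<And>x. x \<in> frontier \<Omega> \<Longrightarrow> level_gauss_curvature (grad x) (hess x) > 0"
begin

lemma open_nbhd: "open U" and frontier_subset_nbhd: "frontier \<Omega> \<subseteq> U"
  and rho_derivative: "\<And>x. x \<in> U \<Longrightarrow> (\<rho> has_derivative (\<lambda>h. grad x \<bullet> h)) (at x)"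
  and grad_derivative: "\<And>x. x \<in> U \<Longrightarrow> (grad has_derivative (\<lambda>h. hess x *v h)) (at x)"
  and hess_continuous: "continuous_on U hess"
  and in_domain_iff: "\<And>x. x \<in> U \<Longrightarrow> x \<in> \<Omega> \<longleftrightarrow> \<rho> x < 0"
  and grad_nonzero: "\<And>x. x \<in> frontier \<Omega> \<Longrightarrow> grad x \<noteq> 0"
  using defining_function unfolding C2_defining_function_def by auto

lemma compact_frontier: "compact (frontier \<Omega>)"
proof -
  have "frontier \<Omega> \<subseteq> closure \<Omega>" by (auto simp: frontier_def)
  then have "bounded (frontier \<Omega>)" using bounded_domain bounded_closure bounded_subset by blast
  then show ?thesis by (simp add: compact_eq_bounded_closed)
qed

lemma frontier_nonempty: "frontier \<Omega> \<noteq> {}"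
  using nonempty_domain bounded_domain by (intro frontier_not_empty) auto

lemma frontier_not_in_domain: "p \<in> frontier \<Omega> \<Longrightarrow> p \<notin> \<Omega>"
  using open_domain by (simp add: frontier_def interior_open)

lemma rho_continuous: "continuous_on U \<rho>"
  by (rule has_derivative_continuous_on) (use rho_derivative in \<open>blast intro: has_derivative_at_withinI\<close>)

lemma grad_continuous: "continuous_on U grad"
  by (rule has_derivative_continuous_on) (use grad_derivative in \<open>blast intro: has_derivative_at_withinI\<close>)

lemma rho_frontier:
  assumes "p \<in> frontier \<Omega>"
  shows "\<rho> p = 0"
proof -
  have pU: "p \<in> U" using assms frontier_subset_nbhd by auto
  then obtain e where e: "e > 0" "cball p e \<subseteq> U" using open_nbhd open_contains_cball by blast
  have "p \<in> ball p e \<inter> closure \<Omega>" using assms e by (simp add: frontier_def)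
  then have "p \<in> closure (ball p e \<inter> \<Omega>)" using open_Int_closure_subset[of "ball p e" \<Omega>] by auto
  moreover have "closure (ball p e \<inter> \<Omega>) \<subseteq> cball p e" by (rule closure_minimal) auto
  then have "continuous_on (closure (ball p e \<inter> \<Omega>)) \<rho>"
    using e by (intro continuous_on_subset[OF rho_continuous]) auto
  ultimately have "\<rho> p \<le> 0"
    using continuous_le_on_closure[of "ball p e \<inter> \<Omega>" \<rho> p 0] e in_domain_iff
    by (force intro: less_imp_le)
  moreover have "\<rho> p \<ge> 0" using in_domain_iff[OF pU] frontier_not_in_domain[OF assms] by simp
  ultimately show ?thesis by simp
qed

lemma hess_symmetric: "x \<in> U \<Longrightarrow> a \<bullet> (hess x *v b) = b \<bullet> (hess x *v a)"
  by (rule hessian_symmetric[OF open_nbhd rho_derivative grad_derivative hess_continuous])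

lemma rho_taylor:
  assumes "\<And>t. 0 \<le> t \<Longrightarrow> t \<le> 1 \<Longrightarrow> x + t *\<^sub>R h \<in> U"
  obtains \<xi> where "0 < \<xi>" "\<xi> < 1"
    "\<rho> (x + h) = \<rho> x + grad x \<bullet> h + (1/2) * ((hess (x + \<xi> *\<^sub>R h) *v h) \<bullet> h)"
  using taylor_second_order[OF rho_derivative grad_derivative assms] by blast

lemma tangent_step_into_domain:
  assumes p: "p \<in> frontier \<Omega>" and e: "e > 0" "ball p e \<subseteq> U"
    and neg: "\<And>z. z \<in> ball p e \<Longrightarrow> (hess z *v w) \<bullet> w < 0"
    and tangent: "w \<bullet> grad p = 0" and t: "t > 0" "t * norm w < e"
  shows "p + t *\<^sub>R w \<in> \<Omega>"
proof -
  have inb: "p + s *\<^sub>R (t *\<^sub>R w) \<in> ball p e" if "0 \<le> s" "s \<le> 1" for s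
  proof -
    have "dist p (p + s *\<^sub>R (t *\<^sub>R w)) = s * (t * norm w)" using that t by (simp add: dist_norm)
    also have "\<dots> \<le> t * norm w" using that t by (intro mult_left_le_one_le) auto
    finally show ?thesis using t by simp
  qed
  obtain \<xi> where \<xi>: "0 < \<xi>" "\<xi> < 1" "\<rho> (p + t *\<^sub>R w) = \<rho> p + grad p \<bullet> (t *\<^sub>R w)
      + (1/2) * ((hess (p + \<xi> *\<^sub>R (t *\<^sub>R w)) *v (t *\<^sub>R w)) \<bullet> (t *\<^sub>R w))"
    using rho_taylor[of p "t *\<^sub>R w"] inb e(2) by blast
  have "(hess (p + \<xi> *\<^sub>R (t *\<^sub>R w)) *v w) \<bullet> w < 0" using neg inb[of \<xi>] \<xi> by auto
  then have "(hess (p + \<xi> *\<^sub>R (t *\<^sub>R w)) *v (t *\<^sub>R w)) \<bullet> (t *\<^sub>R w) < 0"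
    using t by (simp add: matrix_vector_mult_scaleR mult_pos_neg)
  then have "\<rho> (p + t *\<^sub>R w) < 0"
    using \<xi>(3) rho_frontier[OF p] tangent by (simp add: inner_commute)
  moreover have "p + t *\<^sub>R w \<in> U" using inb[of 1] e by auto
  ultimately show ?thesis using in_domain_iff by auto
qed

text \<open>Convexity: if the second fundamental form were negative in some tangent direction \<open>w\<close>,
  both \<open>p + t w\<close> and \<open>p - t w\<close> would lie in \<open>\<Omega>\<close>, and so would their midpoint \<open>p\<close>.\<close>
lemma hess_tangent_nonneg:
  assumes p: "p \<in> frontier \<Omega>" and tangent: "w \<bullet> grad p = 0"
  shows "(hess p *v w) \<bullet> w \<ge> 0"
proof (rule ccontr)
  define f where "f z = w \<bullet> (hess z *v w)" for z
  assume "\<not> ?thesis"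
  then have fp: "f p < 0" and w0: "w \<noteq> 0" by (auto simp: f_def inner_commute)
  have pU: "p \<in> U" using p frontier_subset_nbhd by auto
  have "continuous_on U f" unfolding f_def using hess_continuous by (auto intro!: continuous_intros)
  then have "isCont f p" using open_nbhd pU continuous_on_eq_continuous_at by blast
  then obtain d where d: "d > 0" "\<And>z. dist z p < d \<Longrightarrow> dist (f z) (f p) < - f p"
    using fp unfolding continuous_at_eps_delta by (metis neg_0_less_iff_less)
  obtain e' where e': "e' > 0" "ball p e' \<subseteq> U" using open_nbhd pU openE by blast
  define e where "e = min d e'"
  have e: "e > 0" "ball p e \<subseteq> U" using d e' by (auto simp: e_def)
  have neg: "(hess z *v u) \<bullet> u < 0" if "z \<in> ball p e" "u = w \<or> u = -w" for z u
  proof -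
    have "dist z p < d" using that by (auto simp: e_def dist_commute)
    then have "\<bar>f z - f p\<bar> < - f p" using d(2) by (simp add: dist_real_def)
    then have "f z < 0" by linarith
    moreover have "(hess z *v u) \<bullet> u = f z" using that(2) by (auto simp: f_def inner_commute matrix_vector_mult_uminus_right)
    ultimately show ?thesis by simp
  qed
  define t where "t = e / (2 * norm w)"
  have t: "t > 0" "t * norm w < e" using e w0 by (auto simp: t_def)
  have "p + t *\<^sub>R w \<in> \<Omega>"
    by (rule tangent_step_into_domain[OF p e _ tangent t]) (use neg in blast)
  moreover have "p + t *\<^sub>R (-w) \<in> \<Omega>"
  proof (rule tangent_step_into_domain[OF p e _ _ t(1)])
    show "(hess z *v - w) \<bullet> - w < 0" if "z \<in> ball p e" for z using neg that by blast
  qed (use tangent t in simp_all)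
  ultimately have "midpoint (p + t *\<^sub>R w) (p + t *\<^sub>R (-w)) \<in> \<Omega>"
    using convex_domain midpoint_in_closed_segment convex_contains_segment by blast
  moreover have "midpoint (p + t *\<^sub>R w) (p + t *\<^sub>R (-w)) = p"
    by (simp add: midpoint_def vec_eq_iff field_simps)
  ultimately show False using frontier_not_in_domain[OF p] by simp
qed

text \<open>Positive Gauss curvature excludes a null direction \<open>w\<close> of the (semidefinite) second fundamental
  form: \<open>w\<close> would be in its kernel, and the curvature, evaluated via \<open>adjugate_form_cross3\<close> on
  \<open>w \<times> (g \<times> w) = |w|\<^sup>2 g\<close>, would vanish.\<close>
lemma hess_tangent_pos:
  assumes p: "p \<in> frontier \<Omega>" and tangent: "w \<bullet> grad p = 0" and "w \<noteq> 0"
  shows "(hess p *v w) \<bullet> w > 0"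
proof (rule ccontr)
  define g H where "g = grad p" and "H = hess p"
  define u where "u = cross3 g w"
  define b q where "b = w \<bullet> (H *v u)" and "q = (H *v u) \<bullet> u"
  assume "\<not> ?thesis"
  then have Qw: "(H *v w) \<bullet> w = 0" using hess_tangent_nonneg[OF p tangent] by (simp add: H_def)
  have pU: "p \<in> U" using p frontier_subset_nbhd by auto
  have ug: "u \<bullet> g = 0" unfolding u_def by (rule dot_cross_self(4))
  have q: "q \<ge> 0" using hess_tangent_nonneg[OF p] ug by (simp add: q_def H_def g_def)
  have expand: "(H *v (w + s *\<^sub>R u)) \<bullet> (w + s *\<^sub>R u) = 2 * s * b + s\<^sup>2 * q" for s
    using Qw hess_symmetric[OF pU, of u w]
    by (simp add: b_def q_def H_def matrix_vector_right_distrib matrix_vector_mult_scaleR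
        inner_add_left inner_add_right inner_commute algebra_simps power2_eq_square)
  have "0 \<le> 2 * s * b + s\<^sup>2 * q" for s
    using hess_tangent_nonneg[OF p, of "w + s *\<^sub>R u"] expand[of s] tangent ug
    by (simp add: inner_add_left H_def g_def)
  then have nonneg: "0 \<le> (q+1)\<^sup>2 * (2 * s * b + s\<^sup>2 * q)" for s by simp
  define s where "s = - b / (q + 1)"
  have sq: "s * (q + 1) = - b" using q by (simp add: s_def)
  have "(q+1)\<^sup>2 * (2 * s * b + s\<^sup>2 * q) = 2*b*(s*(q+1))*(q+1) + (s*(q+1))\<^sup>2*q"
    by (simp add: algebra_simps power2_eq_square)
  also have "\<dots> = - (b\<^sup>2 * (q + 2))" unfolding sq by (simp add: algebra_simps power2_eq_square)
  finally have "0 \<le> - (b\<^sup>2 * (q + 2))" using nonneg[of s] by simp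
  then have b: "b = 0" using q by (simp add: mult_le_0_iff)
  have "cross3 w u = (w \<bullet> w) *\<^sub>R g"
    unfolding u_def Lagrange using tangent by (simp add: g_def)
  then have "(\<Sum>i\<in>UNIV. \<Sum>j\<in>UNIV. cross3 w u $ i * cross3 w u $ j * cof3 H i j)
      = (w \<bullet> w)\<^sup>2 * (\<Sum>i\<in>UNIV. \<Sum>j\<in>UNIV. g $ i * g $ j * cof3 H i j)"
    by (simp add: sum_distrib_left power2_eq_square algebra_simps)
  moreover have "(\<Sum>i\<in>UNIV. \<Sum>j\<in>UNIV. cross3 w u $ i * cross3 w u $ j * cof3 H i j) = 0"
    using Qw b hess_symmetric[OF pU, of u w] by (simp add: adjugate_form_cross3 b_def H_def inner_commute)
  moreover have "(\<Sum>i\<in>UNIV. \<Sum>j\<in>UNIV. g $ i * g $ j * cof3 H i j) > 0"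
    using gauss_curvature_pos[OF p] grad_nonzero[OF p]
    by (simp add: level_gauss_curvature_def g_def H_def zero_less_divide_iff)
  ultimately show False using \<open>w \<noteq> 0\<close> by simp
qed

lemma hess_tangent_coercive:
  obtains \<mu> where "\<mu> > 0" "\<And>p w. p \<in> frontier \<Omega> \<Longrightarrow> w \<bullet> grad p = 0 \<Longrightarrow> \<mu> * (norm w)\<^sup>2 \<le> (hess p *v w) \<bullet> w"
proof -
  define S where "S = (frontier \<Omega> \<times> sphere 0 1) \<inter> (\<lambda>z. snd z \<bullet> grad (fst z)) -` {0}"
  have "continuous_on (frontier \<Omega> \<times> sphere 0 1) (\<lambda>z. snd z \<bullet> grad (fst z))"
    using frontier_subset_nbhd
    by (intro continuous_intros continuous_on_compose2[OF grad_continuous]) auto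
  then have "closed S" unfolding S_def
    by (rule continuous_closed_preimage) (auto intro: compact_imp_closed closed_Times compact_frontier)
  moreover have "bounded S" unfolding S_def
    by (rule bounded_subset[OF bounded_Times[OF compact_imp_bounded[OF compact_frontier] bounded_sphere]])
      auto
  ultimately have "compact S" by (simp add: compact_eq_bounded_closed)
  have on_S: "(p, (1 / norm w) *\<^sub>R w) \<in> S" if "p \<in> frontier \<Omega>" "w \<bullet> grad p = 0" "w \<noteq> 0" for p w
    using that by (simp add: S_def)
  have scale: "(hess p *v w) \<bullet> w = (norm w)\<^sup>2 * ((hess p *v ((1/norm w) *\<^sub>R w)) \<bullet> ((1/norm w) *\<^sub>R w))"
    if "w \<noteq> 0" for p w
    using that by (simp add: matrix_vector_mult_scaleR power2_eq_square)
  show ?thesis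
  proof (cases "S = {}")
    case True
    show ?thesis by (rule that[of 1]) (use on_S True in fastforce)+
  next
    case False
    have "continuous_on S (\<lambda>z. (hess (fst z) *v snd z) \<bullet> snd z)"
      using frontier_subset_nbhd
      by (intro continuous_intros continuous_on_compose2[OF hess_continuous]) (auto simp: S_def)
    then obtain z0 where z0: "z0 \<in> S"
      "\<And>z. z \<in> S \<Longrightarrow> (hess (fst z0) *v snd z0) \<bullet> snd z0 \<le> (hess (fst z) *v snd z) \<bullet> snd z"
      using continuous_attains_inf[OF \<open>compact S\<close> False] by blast
    show ?thesis
    proof (rule that)
      show "(hess (fst z0) *v snd z0) \<bullet> snd z0 > 0"
        using z0(1) by (intro hess_tangent_pos) (auto simp: S_def)
      fix p w assume pw: "p \<in> frontier \<Omega>" "w \<bullet> grad p = 0"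
      show "(hess (fst z0) *v snd z0) \<bullet> snd z0 * (norm w)\<^sup>2 \<le> (hess p *v w) \<bullet> w"
      proof (cases "w = 0")
        case False
        from z0(2)[OF on_S[OF pw False]]
        have "(norm w)\<^sup>2 * ((hess (fst z0) *v snd z0) \<bullet> snd z0)
            \<le> (norm w)\<^sup>2 * ((hess p *v ((1/norm w) *\<^sub>R w)) \<bullet> ((1/norm w) *\<^sub>R w))"
          by (intro mult_left_mono) auto
        then show ?thesis by (simp only: scale[OF False, symmetric] mult.commute)
      qed simp
    qed
  qed
qed

lemma frontier_chord_grad_le:
  assumes p: "p \<in> frontier \<Omega>" and q: "q \<in> frontier \<Omega>"
    and seg: "\<And>t. 0 \<le> t \<Longrightarrow> t \<le> 1 \<Longrightarrow> p + t *\<^sub>R (q - p) \<in> U"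
    and bound: "\<And>t. 0 \<le> t \<Longrightarrow> t \<le> 1 \<Longrightarrow>
      \<bar>(hess (p + t *\<^sub>R (q - p)) *v (q - p)) \<bullet> (q - p)\<bar> \<le> B * (norm (q - p))\<^sup>2"
  shows "\<bar>grad p \<bullet> (q - p)\<bar> \<le> B / 2 * (norm (q - p))\<^sup>2"
proof -
  obtain \<xi> where \<xi>: "0 < \<xi>" "\<xi> < 1"
    "\<rho> (p + (q - p)) = \<rho> p + grad p \<bullet> (q - p) + (1/2) * ((hess (p + \<xi> *\<^sub>R (q - p)) *v (q - p)) \<bullet> (q - p))"
    using rho_taylor[OF seg] by blast
  then have "grad p \<bullet> (q - p) = - (1/2) * ((hess (p + \<xi> *\<^sub>R (q - p)) *v (q - p)) \<bullet> (q - p))"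
    using rho_frontier[OF p] rho_frontier[OF q] by simp
  then show ?thesis using bound[of \<xi>] \<xi> by (simp add: abs_mult)
qed

lemma rho_midpoint_le:
  assumes p: "p \<in> frontier \<Omega>" and q: "q \<in> frontier \<Omega>"
    and seg: "\<And>t. 0 \<le> t \<Longrightarrow> t \<le> 1 \<Longrightarrow> p + t *\<^sub>R (q - p) \<in> U"
    and lower: "\<And>t. 0 \<le> t \<Longrightarrow> t \<le> 1 \<Longrightarrow>
      c * (norm (q - p))\<^sup>2 \<le> (hess (p + t *\<^sub>R (q - p)) *v (q - p)) \<bullet> (q - p)"
  shows "\<rho> (midpoint p q) \<le> - c / 8 * (norm (q - p))\<^sup>2"
proof -
  define h m where "h = (1/2) *\<^sub>R (q - p)" and "m = midpoint p q"
  have m: "m + s *\<^sub>R h = p + ((1 + s) / 2) *\<^sub>R (q - p)" for s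
    by (simp add: h_def m_def midpoint_def vec_eq_iff algebra_simps add_divide_distrib)
  have Q: "(hess (m + s *\<^sub>R h) *v h) \<bullet> h \<ge> c / 4 * (norm (q - p))\<^sup>2" if "-1 \<le> s" "s \<le> 1" for s
    using lower[of "(1 + s) / 2"] that unfolding m
    by (simp add: h_def matrix_vector_mult_scaleR power2_eq_square)
  have segU: "m + t *\<^sub>R d \<in> U" if "d = h \<or> d = -h" "0 \<le> t" "t \<le> 1" for d t
    using seg[of "(1 + t) / 2"] seg[of "(1 - t) / 2"] m[of t] m[of "-t"] that by auto
  obtain \<xi>1 where \<xi>1: "0 < \<xi>1" "\<xi>1 < 1"
      "\<rho> (m + h) = \<rho> m + grad m \<bullet> h + (1/2) * ((hess (m + \<xi>1 *\<^sub>R h) *v h) \<bullet> h)"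
    by (rule rho_taylor[of m h]) (use segU in auto)
  obtain \<xi>2 where \<xi>2: "0 < \<xi>2" "\<xi>2 < 1"
      "\<rho> (m + -h) = \<rho> m + grad m \<bullet> -h + (1/2) * ((hess (m + \<xi>2 *\<^sub>R -h) *v -h) \<bullet> -h)"
    by (rule rho_taylor[of m "-h"]) (use segU[of "-h"] in auto)
  have "m + h = q" "m + -h = p" by (simp_all add: m_def h_def midpoint_def vec_eq_iff algebra_simps)
  moreover have "(hess (m + \<xi>2 *\<^sub>R -h) *v -h) \<bullet> -h = (hess (m + (-\<xi>2) *\<^sub>R h) *v h) \<bullet> h"
    by (simp add: matrix_vector_mult_uminus_right)
  ultimately have "2 * \<rho> m + (1/2) * ((hess (m + \<xi>1 *\<^sub>R h) *v h) \<bullet> h)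
      + (1/2) * ((hess (m + (-\<xi>2) *\<^sub>R h) *v h) \<bullet> h) = 0"
    using \<xi>1(3) \<xi>2(3) rho_frontier[OF p] rho_frontier[OF q] by simp
  then show ?thesis using Q[of \<xi>1] Q[of "-\<xi>2"] \<xi>1 \<xi>2 by (simp add: m_def)
qed

lemma ball_subset_domain_of_rho_le:
  assumes "ball m r \<subseteq> U" and grad_le: "\<And>x. x \<in> ball m r \<Longrightarrow> norm (grad x) \<le> G" and "G > 0"
    and "\<rho> m \<le> - G * r"
  shows "ball m r \<subseteq> \<Omega>"
proof
  fix z assume z: "z \<in> ball m r"
  have seg: "m + t *\<^sub>R (z - m) \<in> ball m r" if "0 \<le> t" "t \<le> 1" for t
  proof -
    have "dist m (m + t *\<^sub>R (z - m)) = t * dist z m" using that by (simp add: dist_norm)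
    also have "\<dots> \<le> dist z m" using that by (simp add: mult_left_le_one_le)
    finally show ?thesis using z by (simp add: dist_commute)
  qed
  have "\<exists>t. 0 < t \<and> t < 1 \<and> \<rho> (m + 1 *\<^sub>R (z - m)) - \<rho> (m + 0 *\<^sub>R (z - m))
      = (1 - 0) * (grad (m + t *\<^sub>R (z - m)) \<bullet> (z - m))"
  proof (rule MVT2)
    fix t :: real assume "0 \<le> t" "t \<le> 1"
    then have "m + t *\<^sub>R (z - m) \<in> U" using seg assms(1) by blast
    then show "((\<lambda>t. \<rho> (m + t *\<^sub>R (z - m))) has_real_derivative grad (m + t *\<^sub>R (z - m)) \<bullet> (z - m)) (at t)"
      by (intro has_real_derivative_along_line rho_derivative)
  qed simp
  then obtain t where t: "0 < t" "t < 1" "\<rho> z - \<rho> m = grad (m + t *\<^sub>R (z - m)) \<bullet> (z - m)"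
    by auto
  have "grad (m + t *\<^sub>R (z - m)) \<bullet> (z - m) \<le> G * norm (z - m)"
    using norm_cauchy_schwarz[of "grad (m + t *\<^sub>R (z - m))" "z - m"]
      mult_right_mono[OF grad_le[OF seg], of t "norm (z - m)"] t by simp
  also have "\<dots> < G * r" using z \<open>G > 0\<close> by (simp add: dist_commute flip: dist_norm)
  finally have "\<rho> z < 0" using t(3) assms(4) by linarith
  then show "z \<in> \<Omega>" using in_domain_iff z assms(1) by auto
qed

text \<open>On a short boundary chord \<open>h = q - p\<close> the normal component \<open>grad p \<bullet> h\<close> is only \<open>O(|h|\<^sup>2)\<close>,
  so the coercivity of the Hessian on the tangent plane at \<open>p\<close> transfers to \<open>h\<close>, and then along the
  chord by continuity.\<close>
lemma hess_chord_lower_bound: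
  assumes p: "p \<in> frontier \<Omega>" and q: "q \<in> frontier \<Omega>"
    and seg: "\<And>t. 0 \<le> t \<Longrightarrow> t \<le> 1 \<Longrightarrow> p + t *\<^sub>R (q - p) \<in> U"
    and bound: "\<And>t a b. 0 \<le> t \<Longrightarrow> t \<le> 1 \<Longrightarrow>
      \<bar>a \<bullet> (hess (p + t *\<^sub>R (q - p)) *v b)\<bar> \<le> B * norm a * norm b"
    and osc: "\<And>t. 0 \<le> t \<Longrightarrow> t \<le> 1 \<Longrightarrow>
      \<bar>(q - p) \<bullet> ((hess (p + t *\<^sub>R (q - p)) - hess p) *v (q - p))\<bar> \<le> \<mu> / 8 * (norm (q - p))\<^sup>2"
    and coercive: "\<And>w. w \<bullet> grad p = 0 \<Longrightarrow> \<mu> * (norm w)\<^sup>2 \<le> (hess p *v w) \<bullet> w" and "\<mu> > 0"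
    and g0: "0 < g0" "g0 \<le> norm (grad p)"
    and small: "(\<mu>/2 + 2*B\<^sup>2/\<mu> + B) * B\<^sup>2 / (4 * g0\<^sup>2) * (norm (q - p))\<^sup>2 \<le> \<mu> / 8"
    and t: "0 \<le> t" "t \<le> 1"
  shows "\<mu> / 4 * (norm (q - p))\<^sup>2 \<le> (hess (p + t *\<^sub>R (q - p)) *v (q - p)) \<bullet> (q - p)"
proof -
  define h where "h = q - p"
  define C where "C = \<mu>/2 + 2*B\<^sup>2/\<mu> + B"
  have B: "B \<ge> 0" using bound[of 0 "axis 1 1" "axis 1 1"] abs_ge_zero order_trans by fastforce
  then have C: "C \<ge> 0" using \<open>\<mu> > 0\<close> by (simp add: C_def)
  have pU: "p \<in> U" using seg[of 0] by simp
  have "\<bar>grad p \<bullet> h\<bar> \<le> B / 2 * (norm h)\<^sup>2"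
    unfolding h_def using bound
    by (intro frontier_chord_grad_le[OF p q seg]) (simp_all add: inner_commute power2_eq_square mult.assoc)
  then have "(h \<bullet> grad p)\<^sup>2 \<le> (B / 2 * (norm h)\<^sup>2)\<^sup>2"
    by (metis abs_ge_zero inner_commute power2_abs power_mono)
  moreover have "g0\<^sup>2 \<le> (norm (grad p))\<^sup>2" using g0 by (intro power_mono) auto
  ultimately have "C * ((h \<bullet> grad p)\<^sup>2 / (norm (grad p))\<^sup>2) \<le> C * ((B / 2 * (norm h)\<^sup>2)\<^sup>2 / g0\<^sup>2)"
    using C g0 by (intro mult_left_mono frac_le) auto
  also have "\<dots> = C * B\<^sup>2 / (4 * g0\<^sup>2) * (norm h)\<^sup>2 * (norm h)\<^sup>2"
    by (simp add: power2_eq_square field_simps)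
  also have "\<dots> \<le> \<mu> / 8 * (norm h)\<^sup>2"
    using small by (intro mult_right_mono) (simp_all add: C_def h_def)
  finally have "C * ((h \<bullet> grad p)\<^sup>2 / (norm (grad p))\<^sup>2) \<le> \<mu> / 8 * (norm h)\<^sup>2" .
  moreover have "\<mu> / 2 * (norm h)\<^sup>2 - C * ((h \<bullet> grad p)\<^sup>2 / (norm (grad p))\<^sup>2) \<le> (hess p *v h) \<bullet> h"
    unfolding C_def
  proof (rule quadratic_form_ge_tangential[OF hess_symmetric[OF pU]])
    show "grad p \<noteq> 0" using grad_nonzero[OF p] .
    show "\<bar>a \<bullet> (hess p *v b)\<bar> \<le> B * norm a * norm b" for a b using bound[of 0 a b] by simp
  qed (use coercive \<open>\<mu> > 0\<close> in auto)
  moreover have "(hess (p + t *\<^sub>R h) *v h) \<bullet> h - (hess p *v h) \<bullet> h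
      = h \<bullet> ((hess (p + t *\<^sub>R h) - hess p) *v h)"
    by (simp add: matrix_vector_mult_diff_rdistrib inner_diff_right inner_commute)
  ultimately show ?thesis using osc[OF t] unfolding h_def abs_le_iff by linarith
qed

lemma frontier_nbhd_bounds:
  obtains e0 G B where "e0 > 0" "G > 0"
    "\<And>x. infdist x (frontier \<Omega>) \<le> e0 \<Longrightarrow> x \<in> U"
    "\<And>x a b. infdist x (frontier \<Omega>) \<le> e0 \<Longrightarrow> \<bar>a \<bullet> (hess x *v b)\<bar> \<le> B * norm a * norm b"
    "\<And>x. infdist x (frontier \<Omega>) \<le> e0 \<Longrightarrow> norm (grad x) \<le> G"
    "\<And>\<eta>. \<eta> > 0 \<Longrightarrow> \<exists>\<delta>>0. \<forall>x x'. infdist x (frontier \<Omega>) \<le> e0 \<longrightarrow> infdist x' (frontier \<Omega>) \<le> e0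
        \<longrightarrow> dist x' x < \<delta> \<longrightarrow> (\<forall>a b. \<bar>a \<bullet> ((hess x' - hess x) *v b)\<bar> \<le> \<eta> * norm a * norm b)"
proof -
  obtain e0 where e0: "e0 > 0" "{x. infdist x (frontier \<Omega>) \<le> e0} \<subseteq> U"
    using compact_in_open_separated[OF frontier_nonempty compact_frontier open_nbhd frontier_subset_nbhd]
    by blast
  define K where "K = {x. infdist x (frontier \<Omega>) \<le> e0}"
  have K: "compact K" "K \<subseteq> U"
    using compact_infdist_le[OF frontier_nonempty compact_frontier e0(1)] e0(2) by (simp_all add: K_def)
  have hess_K: "continuous_on K hess" and grad_K: "continuous_on K grad"
    using K(2) continuous_on_subset hess_continuous grad_continuous by blast+
  obtain H where H: "\<And>x. x \<in> K \<Longrightarrow> norm (hess x) \<le> H"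
    using compact_imp_bounded[OF compact_continuous_image[OF hess_K K(1)]]
    unfolding bounded_iff by blast
  obtain G where G: "\<And>x. x \<in> K \<Longrightarrow> norm (grad x) \<le> G"
    using compact_imp_bounded[OF compact_continuous_image[OF grad_K K(1)]]
    unfolding bounded_iff by blast
  show ?thesis
  proof (rule that[of e0 "max G 1" "9 * H"])
    show "\<bar>a \<bullet> (hess x *v b)\<bar> \<le> 9 * H * norm a * norm b" if "infdist x (frontier \<Omega>) \<le> e0" for x a b
      using abs_inner_matrix_vector_le[of a "hess x" b] H[of x] that
      by (simp add: K_def) (smt (verit) mult_right_mono mult_nonneg_nonneg norm_ge_zero)
    show "\<exists>\<delta>>0. \<forall>x x'. infdist x (frontier \<Omega>) \<le> e0 \<longrightarrow> infdist x' (frontier \<Omega>) \<le> e0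
        \<longrightarrow> dist x' x < \<delta> \<longrightarrow> (\<forall>a b. \<bar>a \<bullet> ((hess x' - hess x) *v b)\<bar> \<le> \<eta> * norm a * norm b)"
      if "\<eta> > 0" for \<eta>
    proof -
      obtain \<delta> where "\<delta> > 0" and \<delta>: "\<And>x x'. x \<in> K \<Longrightarrow> x' \<in> K \<Longrightarrow> dist x' x < \<delta> \<Longrightarrow>
          dist (hess x') (hess x) < \<eta> / 9"
        using compact_uniformly_continuous[OF hess_K K(1)] \<open>\<eta> > 0\<close>
        unfolding uniformly_continuous_on_def by (metis zero_less_divide_iff zero_less_numeral)
      have "\<bar>a \<bullet> ((hess x' - hess x) *v b)\<bar> \<le> \<eta> * norm a * norm b"
        if "x \<in> K" "x' \<in> K" "dist x' x < \<delta>" for x x' a b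
        using abs_inner_matrix_vector_le[of a "hess x' - hess x" b] \<delta>[OF that]
        by (simp add: dist_norm) (smt (verit) mult_right_mono mult_nonneg_nonneg norm_ge_zero)
      then show ?thesis using \<open>\<delta> > 0\<close> by (auto simp: K_def)
    qed
  qed (use e0 G in \<open>force simp: K_def le_max_iff_disj\<close>)+
qed

lemma grad_frontier_lower_bound:
  obtains g0 where "g0 > 0" "\<And>p. p \<in> frontier \<Omega> \<Longrightarrow> g0 \<le> norm (grad p)"
proof -
  obtain p0 where "p0 \<in> frontier \<Omega>" "\<And>p. p \<in> frontier \<Omega> \<Longrightarrow> norm (grad p0) \<le> norm (grad p)"
    using continuous_attains_inf[OF compact_frontier frontier_nonempty, of "\<lambda>x. norm (grad x)"]
      continuous_on_norm[OF continuous_on_subset[OF grad_continuous frontier_subset_nbhd]] by blast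
  then show ?thesis using that[of "norm (grad p0)"] grad_nonzero by auto
qed

context
  fixes e0 G B \<mu> \<delta> g0 :: real
  assumes e0: "e0 > 0" and G: "G > 0" and \<mu>: "\<mu> > 0" and g0: "g0 > 0"
    and near_U: "\<And>x. infdist x (frontier \<Omega>) \<le> e0 \<Longrightarrow> x \<in> U"
    and bound: "\<And>x a b. infdist x (frontier \<Omega>) \<le> e0 \<Longrightarrow> \<bar>a \<bullet> (hess x *v b)\<bar> \<le> B * norm a * norm b"
    and grad_le: "\<And>x. infdist x (frontier \<Omega>) \<le> e0 \<Longrightarrow> norm (grad x) \<le> G"
    and hess_osc: "\<And>x x' a b. infdist x (frontier \<Omega>) \<le> e0 \<Longrightarrow> infdist x' (frontier \<Omega>) \<le> e0 \<Longrightarrow>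
      dist x' x < \<delta> \<Longrightarrow> \<bar>a \<bullet> ((hess x' - hess x) *v b)\<bar> \<le> \<mu> / 8 * norm a * norm b"
    and coercive: "\<And>p w. p \<in> frontier \<Omega> \<Longrightarrow> w \<bullet> grad p = 0 \<Longrightarrow> \<mu> * (norm w)\<^sup>2 \<le> (hess p *v w) \<bullet> w"
    and grad_ge: "\<And>p. p \<in> frontier \<Omega> \<Longrightarrow> g0 \<le> norm (grad p)"
begin

lemma hess_short_chord_lower_bound:
  assumes p: "p \<in> frontier \<Omega>" and q: "q \<in> frontier \<Omega>" and pq: "dist p q \<le> r"
    and r: "r < 1" "r < e0 / 2" "r < \<delta>" "(\<mu>/2 + 2*B\<^sup>2/\<mu> + B) * B\<^sup>2 / (4 * g0\<^sup>2) * r < \<mu> / 8"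
    and t: "0 \<le> t" "t \<le> 1"
  shows "infdist (p + t *\<^sub>R (q - p)) (frontier \<Omega>) \<le> e0"
    and "\<mu> / 4 * (norm (q - p))\<^sup>2 \<le> (hess (p + t *\<^sub>R (q - p)) *v (q - p)) \<bullet> (q - p)"
proof -
  define C where "C = (\<mu>/2 + 2*B\<^sup>2/\<mu> + B) * B\<^sup>2 / (4 * g0\<^sup>2)"
  have nh: "norm (q - p) = dist p q" by (simp add: dist_norm norm_minus_commute)
  have seg_close: "dist (p + s *\<^sub>R (q - p)) p \<le> dist p q" if "0 \<le> s" "s \<le> 1" for s
    using that nh by (simp add: dist_norm mult_left_le_one_le)
  have seg_near: "infdist (p + s *\<^sub>R (q - p)) (frontier \<Omega>) \<le> e0" if "0 \<le> s" "s \<le> 1" for s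
    using seg_close[OF that] pq r(2) e0 by (intro infdist_le2[OF p]) linarith
  then show "infdist (p + t *\<^sub>R (q - p)) (frontier \<Omega>) \<le> e0" using t .
  have "\<bar>axis 1 1 \<bullet> (hess p *v axis 1 1)\<bar> \<le> B"
    using bound[of p "axis 1 1" "axis 1 1"] e0 p by simp
  then have "C \<ge> 0" using \<mu> abs_ge_zero order_trans by (fastforce simp: C_def)
  have "(norm (q - p))\<^sup>2 \<le> norm (q - p) * 1"
    unfolding power2_eq_square using nh pq r(1) by (intro mult_left_mono) auto
  then have "C * (norm (q - p))\<^sup>2 \<le> C * r" using nh pq \<open>C \<ge> 0\<close> by (intro mult_left_mono) auto
  show "\<mu> / 4 * (norm (q - p))\<^sup>2 \<le> (hess (p + t *\<^sub>R (q - p)) *v (q - p)) \<bullet> (q - p)"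
  proof (rule hess_chord_lower_bound[OF p q _ _ _ coercive[OF p] \<mu> g0 grad_ge[OF p] _ t])
    show "p + s *\<^sub>R (q - p) \<in> U" if "0 \<le> s" "s \<le> 1" for s using near_U[OF seg_near[OF that]] .
    show "\<bar>a \<bullet> (hess (p + s *\<^sub>R (q - p)) *v b)\<bar> \<le> B * norm a * norm b" if "0 \<le> s" "s \<le> 1" for s a b
      using bound[OF seg_near[OF that]] .
    show "\<bar>(q - p) \<bullet> ((hess (p + s *\<^sub>R (q - p)) - hess p) *v (q - p))\<bar> \<le> \<mu> / 8 * (norm (q - p))\<^sup>2"
      if "0 \<le> s" "s \<le> 1" for s
      using hess_osc[OF _ seg_near[OF that], of p "q - p" "q - p"] seg_close[OF that] pq r(3) e0 p
      by (simp add: power2_eq_square mult.assoc)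
    show "(\<mu>/2 + 2*B\<^sup>2/\<mu> + B) * B\<^sup>2 / (4 * g0\<^sup>2) * (norm (q - p))\<^sup>2 \<le> \<mu> / 8"
      unfolding C_def[symmetric] using \<open>C * (norm (q - p))\<^sup>2 \<le> C * r\<close> r(4)[folded C_def] by linarith
  qed
qed

lemma midpoint_ball_short_chord:
  assumes p: "p \<in> frontier \<Omega>" and q: "q \<in> frontier \<Omega>" and pq: "dist p q \<le> r"
    and r: "r < 1" "r < e0 / 2" "r < \<delta>" "(\<mu>/2 + 2*B\<^sup>2/\<mu> + B) * B\<^sup>2 / (4 * g0\<^sup>2) * r < \<mu> / 8"
      "\<mu> / (32 * G) * r < e0 / 2"
  shows "ball (midpoint p q) (\<mu> / (32 * G) * (dist p q)\<^sup>2) \<subseteq> \<Omega>"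
proof (rule ball_subset_domain_of_rho_le[OF _ _ G])
  note chord = hess_short_chord_lower_bound[OF p q pq r(1-4)]
  have "\<rho> (midpoint p q) \<le> - (\<mu> / 4) / 8 * (norm (q - p))\<^sup>2"
    using near_U[OF chord(1)] chord(2) by (intro rho_midpoint_le[OF p q]) auto
  then show "\<rho> (midpoint p q) \<le> - G * (\<mu> / (32 * G) * (dist p q)\<^sup>2)"
    using G by (simp add: dist_norm norm_minus_commute)
  have "(dist p q)\<^sup>2 \<le> dist p q * 1" unfolding power2_eq_square using pq r(1) by (intro mult_left_mono) auto
  then have "\<mu> / (32 * G) * (dist p q)\<^sup>2 \<le> \<mu> / (32 * G) * r"
    using pq \<mu> G by (intro mult_left_mono) auto
  then have ball_near: "infdist x (frontier \<Omega>) \<le> e0"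
    if "x \<in> ball (midpoint p q) (\<mu> / (32 * G) * (dist p q)\<^sup>2)" for x
    using that dist_triangle[of x p "midpoint p q"] pq r(2,5) e0
    by (intro infdist_le2[OF p]) (simp add: dist_midpoint dist_commute)
  then show "ball (midpoint p q) (\<mu> / (32 * G) * (dist p q)\<^sup>2) \<subseteq> U" using near_U by blast
  show "norm (grad x) \<le> G" if "x \<in> ball (midpoint p q) (\<mu> / (32 * G) * (dist p q)\<^sup>2)" for x
    using grad_le[OF ball_near[OF that]] .
qed

end

lemma uniformly_convex_near_frontier:
  obtains r0 \<kappa> where "r0 > 0" "\<kappa> > 0"
    "\<And>p q. p \<in> frontier \<Omega> \<Longrightarrow> q \<in> frontier \<Omega> \<Longrightarrow> dist p q \<le> r0 \<Longrightarrow>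
       ball (midpoint p q) (\<kappa> * (dist p q)\<^sup>2) \<subseteq> \<Omega>"
proof -
  obtain e0 G B where e0: "e0 > 0" and G: "G > 0"
    and near_U: "\<And>x. infdist x (frontier \<Omega>) \<le> e0 \<Longrightarrow> x \<in> U"
    and bound: "\<And>x a b. infdist x (frontier \<Omega>) \<le> e0 \<Longrightarrow> \<bar>a \<bullet> (hess x *v b)\<bar> \<le> B * norm a * norm b"
    and grad_le: "\<And>x. infdist x (frontier \<Omega>) \<le> e0 \<Longrightarrow> norm (grad x) \<le> G"
    and hess_uc: "\<And>\<eta>. \<eta> > 0 \<Longrightarrow> \<exists>\<delta>>0. \<forall>x x'. infdist x (frontier \<Omega>) \<le> e0 \<longrightarrow>
        infdist x' (frontier \<Omega>) \<le> e0 \<longrightarrow> dist x' x < \<delta> \<longrightarrow>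
        (\<forall>a b. \<bar>a \<bullet> ((hess x' - hess x) *v b)\<bar> \<le> \<eta> * norm a * norm b)"
    by (rule frontier_nbhd_bounds) blast
  obtain g0 where g0: "g0 > 0" "\<And>p. p \<in> frontier \<Omega> \<Longrightarrow> g0 \<le> norm (grad p)"
    by (rule grad_frontier_lower_bound) blast
  obtain \<mu> where \<mu>: "\<mu> > 0"
    and coercive: "\<And>p w. p \<in> frontier \<Omega> \<Longrightarrow> w \<bullet> grad p = 0 \<Longrightarrow> \<mu> * (norm w)\<^sup>2 \<le> (hess p *v w) \<bullet> w"
    by (rule hess_tangent_coercive) blast
  obtain \<delta> where "\<delta> > 0" and "\<forall>x x'. infdist x (frontier \<Omega>) \<le> e0 \<longrightarrow>
      infdist x' (frontier \<Omega>) \<le> e0 \<longrightarrow> dist x' x < \<delta> \<longrightarrow>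
      (\<forall>a b. \<bar>a \<bullet> ((hess x' - hess x) *v b)\<bar> \<le> \<mu> / 8 * norm a * norm b)"
    using hess_uc[of "\<mu> / 8"] \<mu> by auto
  then have \<delta>: "\<And>x x' a b. infdist x (frontier \<Omega>) \<le> e0 \<Longrightarrow>
      infdist x' (frontier \<Omega>) \<le> e0 \<Longrightarrow> dist x' x < \<delta> \<Longrightarrow>
      \<bar>a \<bullet> ((hess x' - hess x) *v b)\<bar> \<le> \<mu> / 8 * norm a * norm b"
    by blast
  define C \<kappa> where "C = (\<mu>/2 + 2*B\<^sup>2/\<mu> + B) * B\<^sup>2 / (4 * g0\<^sup>2)" and "\<kappa> = \<mu> / (32 * G)"
  have "((\<lambda>r. r) \<longlongrightarrow> 0) (at_right 0)" "((\<lambda>r. C * r) \<longlongrightarrow> 0) (at_right 0)"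
      "((\<lambda>r. \<kappa> * r) \<longlongrightarrow> 0) (at_right (0::real))"
    by (auto intro!: tendsto_eq_intros)
  then have "\<forall>\<^sub>F r in at_right 0. 0 < r \<and> r < 1 \<and> r < e0 / 2 \<and> r < \<delta> \<and> C * r < \<mu> / 8 \<and> \<kappa> * r < e0 / 2"
    using e0 \<mu> \<open>\<delta> > 0\<close> by (intro eventually_conj eventually_at_right_less order_tendstoD(2)) auto
  then obtain r0 where "0 < r0 \<and> r0 < 1 \<and> r0 < e0 / 2 \<and> r0 < \<delta> \<and> C * r0 < \<mu> / 8 \<and> \<kappa> * r0 < e0 / 2"
    using eventually_happens[of _ "at_right (0::real)"] by auto
  then have r0: "0 < r0" "r0 < 1" "r0 < e0 / 2" "r0 < \<delta>" "C * r0 < \<mu> / 8" "\<kappa> * r0 < e0 / 2"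
    by auto
  show ?thesis
  proof (rule that)
    show "r0 > 0" "\<kappa> > 0" using r0(1) \<mu> G by (simp_all add: \<kappa>_def)
    show "ball (midpoint p q) (\<kappa> * (dist p q)\<^sup>2) \<subseteq> \<Omega>"
      if "p \<in> frontier \<Omega>" "q \<in> frontier \<Omega>" "dist p q \<le> r0" for p q
      unfolding \<kappa>_def
      by (rule midpoint_ball_short_chord[OF e0 G \<mu> g0(1) near_U bound grad_le \<delta> coercive g0(2) that
          r0(2-4) r0(5)[unfolded C_def] r0(6)[unfolded \<kappa>_def]])
  qed
qed

lemma midpoint_frontier_in_domain:
  assumes p: "p \<in> frontier \<Omega>" and q: "q \<in> frontier \<Omega>" and "p \<noteq> q"
  shows "midpoint p q \<in> \<Omega>"
proof (rule ccontr)
  assume "midpoint p q \<notin> \<Omega>"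
  then have seg: "closed_segment p q \<subseteq> frontier \<Omega>"
    using p q by (intro convex_segment_in_frontier convex_domain open_domain) (auto simp: frontier_def)
  obtain r0 \<kappa> where "r0 > 0" "\<kappa> > 0" and near:
    "\<And>p q. p \<in> frontier \<Omega> \<Longrightarrow> q \<in> frontier \<Omega> \<Longrightarrow> dist p q \<le> r0 \<Longrightarrow>
       ball (midpoint p q) (\<kappa> * (dist p q)\<^sup>2) \<subseteq> \<Omega>"
    by (rule uniformly_convex_near_frontier) blast
  define t where "t = min 1 (r0 / dist p q)"
  have t: "0 < t" "t \<le> 1" "t * dist p q \<le> r0"
    using \<open>r0 > 0\<close> \<open>p \<noteq> q\<close> by (auto simp: t_def min_mult_distrib_right)
  define q' where "q' = p + t *\<^sub>R (q - p)"
  have "q' \<in> closed_segment p q"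
    using t by (auto simp: q'_def closed_segment_def algebra_simps intro!: exI[of _ t])
  then have sub: "closed_segment p q' \<subseteq> closed_segment p q" by (simp add: subset_closed_segment)
  have dq': "dist p q' = t * dist p q" using t by (simp add: q'_def dist_norm norm_minus_commute)
  then have "ball (midpoint p q') (\<kappa> * (dist p q')\<^sup>2) \<subseteq> \<Omega>"
    using near[of p q'] p seg sub t by auto
  moreover have "\<kappa> * (dist p q')\<^sup>2 > 0" using \<open>\<kappa> > 0\<close> t dq' \<open>p \<noteq> q\<close> by simp
  ultimately have "midpoint p q' \<in> \<Omega>" by (meson centre_in_ball subsetD)
  moreover have "midpoint p q' \<in> frontier \<Omega>" using seg sub midpoint_in_closed_segment by blast
  ultimately show False using frontier_not_in_domain by blast
qed

lemma bdist_midpoint_far_pairs: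
  assumes "r0 > 0"
  obtains d0 where "d0 > 0"
    "\<And>p q. p \<in> frontier \<Omega> \<Longrightarrow> q \<in> frontier \<Omega> \<Longrightarrow> r0 \<le> dist p q \<Longrightarrow> d0 \<le> bdist \<Omega> (midpoint p q)"
proof -
  define P where "P = (frontier \<Omega> \<times> frontier \<Omega>) \<inter> (\<lambda>z. dist (fst z) (snd z)) -` {r0..}"
  have "closed P" unfolding P_def
    by (intro continuous_closed_preimage continuous_intros closed_Times compact_imp_closed
        compact_frontier closed_atLeast)
  then have "compact (frontier \<Omega> \<times> frontier \<Omega> \<inter> P)"
    by (rule compact_Int_closed[OF compact_Times[OF compact_frontier compact_frontier]])
  then have "compact P" by (simp add: P_def Int_absorb1)
  show ?thesis
  proof (cases "P = {}")
    case True
    show ?thesis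
    proof (rule that[of 1])
      fix p q assume "p \<in> frontier \<Omega>" "q \<in> frontier \<Omega>" "r0 \<le> dist p q"
      then have "(p, q) \<in> P" by (simp add: P_def)
      with True show "1 \<le> bdist \<Omega> (midpoint p q)" by simp
    qed simp
  next
    case False
    have "continuous_on P (\<lambda>z. bdist \<Omega> (midpoint (fst z) (snd z)))"
      unfolding bdist_def midpoint_def by (intro continuous_on_infdist continuous_intros)
    then obtain z0 where z0: "z0 \<in> P"
      "\<And>z. z \<in> P \<Longrightarrow> bdist \<Omega> (midpoint (fst z0) (snd z0)) \<le> bdist \<Omega> (midpoint (fst z) (snd z))"
      using continuous_attains_inf[OF \<open>compact P\<close> False] by blast
    then have "midpoint (fst z0) (snd z0) \<in> \<Omega>"
      using \<open>r0 > 0\<close> by (intro midpoint_frontier_in_domain) (auto simp: P_def)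
    then have "bdist \<Omega> (midpoint (fst z0) (snd z0)) > 0"
      by (rule bdist_pos[OF open_domain _ frontier_nonempty])
    then show ?thesis using that z0(2) by (auto simp: P_def)
  qed
qed

theorem uniformly_convex:
  obtains \<kappa> where "\<kappa> > 0" "uniformly_convex_with \<kappa> \<Omega>"
proof -
  obtain r0 \<kappa>1 where "r0 > 0" "\<kappa>1 > 0" and near:
    "\<And>p q. p \<in> frontier \<Omega> \<Longrightarrow> q \<in> frontier \<Omega> \<Longrightarrow> dist p q \<le> r0 \<Longrightarrow>
       ball (midpoint p q) (\<kappa>1 * (dist p q)\<^sup>2) \<subseteq> \<Omega>"
    by (rule uniformly_convex_near_frontier) blast
  obtain d0 where "d0 > 0" and far:
    "\<And>p q. p \<in> frontier \<Omega> \<Longrightarrow> q \<in> frontier \<Omega> \<Longrightarrow> r0 \<le> dist p q \<Longrightarrow> d0 \<le> bdist \<Omega> (midpoint p q)"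
    using bdist_midpoint_far_pairs[OF \<open>r0 > 0\<close>] by blast
  obtain D0 where "\<forall>p\<in>frontier \<Omega>. \<forall>q\<in>frontier \<Omega>. dist p q \<le> D0"
    using compact_imp_bounded[OF compact_frontier] unfolding bounded_two_points by blast
  define D where "D = max D0 1"
  have D: "D > 0" "\<And>p q. p \<in> frontier \<Omega> \<Longrightarrow> q \<in> frontier \<Omega> \<Longrightarrow> dist p q \<le> D"
    using \<open>\<forall>p\<in>frontier \<Omega>. \<forall>q\<in>frontier \<Omega>. dist p q \<le> D0\<close> by (auto simp: D_def le_max_iff_disj)
  define \<kappa> where "\<kappa> = min \<kappa>1 (d0 / D\<^sup>2)"
  show ?thesis
  proof (rule that)
    show "\<kappa> > 0" using \<open>\<kappa>1 > 0\<close> \<open>d0 > 0\<close> D(1) by (simp add: \<kappa>_def)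
    show "uniformly_convex_with \<kappa> \<Omega>" unfolding uniformly_convex_with_def
    proof (intro ballI)
      fix p q assume p: "p \<in> frontier \<Omega>" and q: "q \<in> frontier \<Omega>"
      show "ball (midpoint p q) (\<kappa> * (dist p q)\<^sup>2) \<subseteq> \<Omega>"
      proof (cases "dist p q \<le> r0")
        case True
        have "\<kappa> * (dist p q)\<^sup>2 \<le> \<kappa>1 * (dist p q)\<^sup>2" by (intro mult_right_mono) (auto simp: \<kappa>_def)
        then show ?thesis using near[OF p q True] subset_ball by blast
      next
        case False
        have "\<kappa> * (dist p q)\<^sup>2 \<le> d0 / D\<^sup>2 * D\<^sup>2"
          using D(2)[OF p q] \<open>d0 > 0\<close> by (intro mult_mono power_mono) (auto simp: \<kappa>_def)
        also have "\<dots> \<le> bdist \<Omega> (midpoint p q)" using far[OF p q] False D(1) by simp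
        finally have "ball (midpoint p q) (\<kappa> * (dist p q)\<^sup>2) \<subseteq> ball (midpoint p q) (bdist \<Omega> (midpoint p q))"
          by (rule subset_ball)
        moreover have "p \<noteq> q" using False \<open>r0 > 0\<close> by auto
        then have "midpoint p q \<in> \<Omega>" by (rule midpoint_frontier_in_domain[OF p q])
        ultimately show ?thesis using ball_bdist_subset[OF open_domain] by blast
      qed
    qed
  qed
qed

end

theorem mainTheorem15:
  fixes \<Omega> :: "(real^3) set"
  assumes "open \<Omega>" and "connected \<Omega>" and "\<Omega> \<noteq> {}"
    and "bounded \<Omega>" and "convex \<Omega>"
    and "C2_boundary_pos_gauss \<Omega>"
  shows "\<exists>C::real. \<forall>y\<in>\<Omega>. \<forall>v::real^3. norm v = 1 \<longrightarrow>
     (\<forall>\<epsilon>::real. 0 \<le> \<epsilon> \<and> \<epsilon> < 1/2 \<longrightarrow>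
        (\<integral>\<^sup>+ r. indicator {0..norm (q_plus \<Omega> y v - y)} r *
            ennreal (bdist \<Omega> (y + r *\<^sub>R v) powr (-1/2 + \<epsilon>)) \<partial>lborel) \<le> ennreal C) \<and>
     (\<forall>\<epsilon>::real. 0 < \<epsilon> \<and> \<epsilon> < 1/2 \<longrightarrow>
        (\<integral>\<^sup>+ r. indicator {0..norm (q_plus \<Omega> y v - y)} r *
            ennreal (bdist \<Omega> (y + r *\<^sub>R v) powr (-1 + \<epsilon>)) \<partial>lborel)
          \<le> ennreal (C / \<epsilon> * bdist \<Omega> y powr (-1/2 + \<epsilon>)))"
proof -
  obtain U \<rho> grad hess where "C2_defining_function \<Omega> U \<rho> grad hess"
    "\<forall>x\<in>frontier \<Omega>. level_gauss_curvature (grad x) (hess x) > 0"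
    using assms(6) unfolding C2_boundary_pos_gauss_def by blast
  then interpret pos_curved_convex_domain \<Omega> U \<rho> grad hess
    using assms by unfold_locales auto
  obtain \<kappa>0 where "\<kappa>0 > 0" "uniformly_convex_with \<kappa>0 \<Omega>" by (rule uniformly_convex)
  define \<kappa> where "\<kappa> = min \<kappa>0 (1/2)"
  have \<kappa>: "0 < \<kappa>" "\<kappa> \<le> 1/2" "uniformly_convex_with \<kappa> \<Omega>"
    using \<open>\<kappa>0 > 0\<close> uniformly_convex_with_mono[OF \<open>uniformly_convex_with \<kappa>0 \<Omega>\<close>] by (auto simp: \<kappa>_def)
  obtain D0 where "\<forall>p\<in>frontier \<Omega>. \<forall>q\<in>frontier \<Omega>. dist p q \<le> D0"
    using compact_imp_bounded[OF compact_frontier] unfolding bounded_two_points by blast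
  then have diam: "\<And>p q. p \<in> frontier \<Omega> \<Longrightarrow> q \<in> frontier \<Omega> \<Longrightarrow> dist p q \<le> max D0 1" by fastforce
  define C where "C = max (4 * (2*\<kappa>) powr (-1/2) * max D0 1) (2 * \<kappa> powr (-1/2))"
  show ?thesis
  proof (intro exI[of _ C] ballI allI impI conjI)
    fix y and v :: "real^3" and \<epsilon> :: real assume "y \<in> \<Omega>" "norm v = 1" "0 \<le> \<epsilon> \<and> \<epsilon> < 1/2"
    then have "(\<integral>\<^sup>+ r. indicator {0..norm (q_plus \<Omega> y v - y)} r *
        ennreal (bdist \<Omega> (y + r *\<^sub>R v) powr (-1/2 + \<epsilon>)) \<partial>lborel)
      \<le> ennreal (4 * (2*\<kappa>) powr (-1/2) * max D0 1)"
      by (intro chord_integral_bdist_powr_le[OF assms(1,4,5) \<kappa>(3,1,2) diam]) auto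
    then show "(\<integral>\<^sup>+ r. indicator {0..norm (q_plus \<Omega> y v - y)} r *
        ennreal (bdist \<Omega> (y + r *\<^sub>R v) powr (-1/2 + \<epsilon>)) \<partial>lborel) \<le> ennreal C"
      unfolding C_def by (meson ennreal_leI max.cobounded1 order_trans)
  next
    fix y and v :: "real^3" and \<epsilon> :: real assume "y \<in> \<Omega>" "norm v = 1" "0 < \<epsilon> \<and> \<epsilon> < 1/2"
    then have "(\<integral>\<^sup>+ r. indicator {0..norm (q_plus \<Omega> y v - y)} r *
        ennreal (bdist \<Omega> (y + r *\<^sub>R v) powr (-1 + \<epsilon>)) \<partial>lborel)
      \<le> ennreal (2 * \<kappa> powr (-1/2) / \<epsilon> * bdist \<Omega> y powr (-1/2 + \<epsilon>))"
      by (intro chord_integral_bdist_powr_le_weighted[OF assms(1,4,5) \<kappa>(3,1)]) auto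
    also have "\<dots> \<le> ennreal (C / \<epsilon> * bdist \<Omega> y powr (-1/2 + \<epsilon>))"
      using \<open>0 < \<epsilon> \<and> \<epsilon> < 1/2\<close>
      by (intro ennreal_leI mult_right_mono divide_right_mono) (auto simp: C_def)
    finally show "(\<integral>\<^sup>+ r. indicator {0..norm (q_plus \<Omega> y v - y)} r *
        ennreal (bdist \<Omega> (y + r *\<^sub>R v) powr (-1 + \<epsilon>)) \<partial>lborel)
      \<le> ennreal (C / \<epsilon> * bdist \<Omega> y powr (-1/2 + \<epsilon>))" .
  qed
qed

end
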